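(* Let $\mathbf{A}$ be a fixed finite $\sigma$-structure. The following are equivalent: (1) $\mathrm{CSP}(\mathbf{A})$ is closed under $\equiv_1$-equivalence, i.e. for all $\sigma$-structures $\mathbf{X}_1\equiv_1\mathbf{X}_2$ we have $\mathbf{X}_1\to\mathbf{A}$ iff $\mathbf{X}_2\to\mathbf{A}$; (2) $\mathrm{SA}^1$ decides $\mathrm{CSP}(\mathbf{A})$; (3) $\mathrm{BLP}$ decides $\mathrm{CSP}(\mathbf{A})$; (4) $\mathbf{A}$ has symmetric polymorphisms of all arities.
   Context: A signature $\sigma$ is a finite set of relation symbols with arities $\operatorname{ar}(R)\ge1$; a $\sigma$-structure $\mathbf{A}$ has finite universe $A$ and non-empty relations $R^\mathbf{A}\subseteq A^{\operatorname{ar}(R)}$. For a tuple $\mathbf{a}$, $a_i$ is its $i$-th entry, $\{\mathbf{a}\}$ its set of entries. $\mathbf{X}\to\mathbf{A}$ means there is a homomorphism, i.e. $h:X\to A$ with $h(\mathbf{x})\in R^\mathbf{A}$ for all $\mathbf{x}\in R^\mathbf{X}$. $\mathrm{CSP}(\mathbf{A})$ is the problem of deciding, for an input $\sigma$-structure $\mathbf{X}$, whether $\mathbf{X}\to\mathbf{A}$. Constraints: $\mathcal{C}_\mathbf{A}=\{R(\mathbf{a}):R\in\sigma,\mathbf{a}\in R^\mathbf{A}\}$ (formal symbols). $\equiv_1$: the factor graph of $\mathbf{A}$ is the bipartite graph on $A\cup\mathcal{C}_\mathbf{A}$ with edges $\{a,R(\mathbf{a})\}$ for $a\in\{\mathbf{a}\}$,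 labelled $(\{i:a_i=a\},R)$. $\delta_0^\mathbf{A}(v)$ is one of two fixed symbols according as $v\in A$ or $v\in\mathcal{C}_\mathbf{A}$; $\delta_j^\mathbf{A}(v)=\{\{(\text{label of }\{v,w\},\delta_{j-1}^\mathbf{A}(w)): w \text{ adjacent to } v\}\}$; $\delta^\mathbf{A}(v)=(\delta^\mathbf{A}_j(v))_{j\ge0}$. $\mathbf{A}\equiv_1\mathbf{B}$ iff $\{\{\delta^\mathbf{A}(v): v\in A\cup\mathcal{C}_\mathbf{A}\}\}=\{\{\delta^\mathbf{B}(v): v\in B\cup\mathcal{C}_\mathbf{B}\}\}$. $\mathrm{BLP}(\mathbf{X},\mathbf{A})$: variables $p_x(a)\in[0,1]$ ($x\in X,a\in A$) and $p_{R(\mathbf{x})}(\mathbf{a})\in[0,1]$ ($R(\mathbf{x})\in\mathcal{C}_\mathbf{X}$, $\mathbf{a}\in A^{\operatorname{ar}(R)}$), with $\sum_a p_x(a)=1$; $p_x(a)=\sum_{\mathbf{a}: a_i=a}p_{R(\mathbf{x})}(\mathbf{a})$ for every $R(\mathbf{x})\in\mathcal{C}_\mathbf{X}$, $a\in A$ and $i$ with $x_i=x$; and $p_{R(\mathbf{x})}(\mathbf{a})=0$ if $\mathbf{a}\notin R^\mathbf{A}$. $\mathrm{SA}^1(\mathbf{X},\mathbf{A})$ is $\mathrm{BLP}(\mathbf{X},\mathbf{A})$ plus the constraints $p_{R(\mathbf{x})}(\mathbf{a})=0$ whenever there are $i,j$ with $x_i=x_j$ and $a_i\ne a_j$. A system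 is feasible if it has a rational solution; $L\in\{\mathrm{BLP},\mathrm{SA}^1\}$ decides $\mathrm{CSP}(\mathbf{A})$ if for every $\sigma$-structure $\mathbf{X}$, feasibility of $L(\mathbf{X},\mathbf{A})$ implies $\mathbf{X}\to\mathbf{A}$. A $k$-ary polymorphism of $\mathbf{A}$ is $f:A^k\to A$ such that applying $f$ coordinatewise to any $k$ tuples of $R^\mathbf{A}$ gives a tuple of $R^\mathbf{A}$, for all $R\in\sigma$; it is symmetric if $f(a_1,\dots,a_k)=f(a_{\rho(1)},\dots,a_{\rho(k)})$ for all permutations $\rho$ of $[k]$. "Of all arities" means for every $k\ge1$. *)

theory Defs
  imports Complex_Main "HOL-Library.Multiset" "HOL-Combinatorics.Permutations"
begin

text \<open>A structure has a universe and, for every symbol,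
  a set of tuples (represented as lists; tuple positions are indexed 0,...,ar R - 1).\<close>

record ('a, 'r) struc =
  univ :: "'a set"
  rels :: "'r \<Rightarrow> 'a list set"

definition is_signature :: "'r set \<Rightarrow> ('r \<Rightarrow> nat) \<Rightarrow> bool" where
  "is_signature sig ar \<longleftrightarrow> finite sig \<and> (\<forall>R\<in>sig. ar R \<ge> 1)"

definition is_struc :: "'r set \<Rightarrow> ('r \<Rightarrow> nat) \<Rightarrow> ('a, 'r) struc \<Rightarrow> bool" where
  "is_struc sig ar S \<longleftrightarrow> finite (univ S) \<and>
     (\<forall>R\<in>sig. rels S R \<noteq> {} \<and> (\<forall>t\<in>rels S R. length t = ar R \<and> set t \<subseteq> univ S))"

definition hom_exists :: "'r set \<Rightarrow> ('x, 'r) struc \<Rightarrow> ('a, 'r) struc \<Rightarrow> bool" where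
  "hom_exists sig X A \<longleftrightarrow>
     (\<exists>h. h ` univ X \<subseteq> univ A \<and> (\<forall>R\<in>sig. \<forall>t\<in>rels X R. map h t \<in> rels A R))"

definition constraints :: "'r set \<Rightarrow> ('a, 'r) struc \<Rightarrow> ('r \<times> 'a list) set" where
  "constraints sig S = {(R, t). R \<in> sig \<and> t \<in> rels S R}"

definition edge_label :: "('r \<times> 'a list) \<Rightarrow> 'a \<Rightarrow> nat set \<times> 'r" where
  "edge_label c a = ({i. i < length (snd c) \<and> snd c ! i = a}, fst c)"

text \<open>Colours produced by colour refinement on the factor graph.\<close>
datatype 'r color = Base bool | Refine "((nat set \<times> 'r) \<times> 'r color) multiset"

text \<open>delta_j of a vertex of the factor graph; vertices are Inl a (elements) and
  Inr c (constraints).\<close>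
fun delta :: "'r set \<Rightarrow> ('a, 'r) struc \<Rightarrow> nat \<Rightarrow> 'a + ('r \<times> 'a list) \<Rightarrow> 'r color" where
  "delta sig S 0 v = Base (isl v)"
| "delta sig S (Suc j) (Inl a) =
     Refine (image_mset (\<lambda>c. (edge_label c a, delta sig S j (Inr c)))
       (mset_set {c \<in> constraints sig S. a \<in> set (snd c)}))"
| "delta sig S (Suc j) (Inr c) =
     Refine (image_mset (\<lambda>a. (edge_label c a, delta sig S j (Inl a)))
       (mset_set (set (snd c))))"

definition fg_vertices :: "'r set \<Rightarrow> ('a, 'r) struc \<Rightarrow> ('a + ('r \<times> 'a list)) set" where
  "fg_vertices sig S = Inl ` univ S \<union> Inr ` constraints sig S"

definition equiv1 :: "'r set \<Rightarrow> ('a, 'r) struc \<Rightarrow> ('b, 'r) struc \<Rightarrow> bool" where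
  "equiv1 sig A B \<longleftrightarrow>
     image_mset (\<lambda>v j. delta sig A j v) (mset_set (fg_vertices sig A)) =
     image_mset (\<lambda>v j. delta sig B j v) (mset_set (fg_vertices sig B))"

definition tuples :: "('a, 'r) struc \<Rightarrow> nat \<Rightarrow> 'a list set" where
  "tuples A n = {t. length t = n \<and> set t \<subseteq> univ A}"

text \<open>Rational feasibility of BLP(X,A).  px x a = p_x(a),  pc R xs t = p_{R(xs)}(t).\<close>
definition blp_system ::
  "'r set \<Rightarrow> ('r \<Rightarrow> nat) \<Rightarrow> ('x, 'r) struc \<Rightarrow> ('a, 'r) struc \<Rightarrow>
   ('x \<Rightarrow> 'a \<Rightarrow> rat) \<Rightarrow> ('r \<Rightarrow> 'x list \<Rightarrow> 'a list \<Rightarrow> rat) \<Rightarrow> bool" where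
  "blp_system sig ar X A px pc \<longleftrightarrow>
     (\<forall>x\<in>univ X. \<forall>a\<in>univ A. 0 \<le> px x a \<and> px x a \<le> 1) \<and>
     (\<forall>(R, xs)\<in>constraints sig X. \<forall>t\<in>tuples A (ar R). 0 \<le> pc R xs t \<and> pc R xs t \<le> 1) \<and>
     (\<forall>x\<in>univ X. (\<Sum>a\<in>univ A. px x a) = 1) \<and>
     (\<forall>(R, xs)\<in>constraints sig X. \<forall>a\<in>univ A. \<forall>i<length xs.
        px (xs ! i) a = (\<Sum>t\<in>{t\<in>tuples A (ar R). t ! i = a}. pc R xs t)) \<and>
     (\<forall>(R, xs)\<in>constraints sig X. \<forall>t\<in>tuples A (ar R). t \<notin> rels A R \<longrightarrow> pc R xs t = 0)"

definition blp_feasible :: "'r set \<Rightarrow> ('r \<Rightarrow> nat) \<Rightarrow> ('x, 'r) struc \<Rightarrow> ('a, 'r) struc \<Rightarrow> bool" where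
  "blp_feasible sig ar X A \<longleftrightarrow> (\<exists>px pc. blp_system sig ar X A px pc)"

definition sa1_feasible :: "'r set \<Rightarrow> ('r \<Rightarrow> nat) \<Rightarrow> ('x, 'r) struc \<Rightarrow> ('a, 'r) struc \<Rightarrow> bool" where
  "sa1_feasible sig ar X A \<longleftrightarrow> (\<exists>px pc. blp_system sig ar X A px pc \<and>
     (\<forall>(R, xs)\<in>constraints sig X. \<forall>t\<in>tuples A (ar R).
        (\<exists>i<length xs. \<exists>j<length xs. xs ! i = xs ! j \<and> t ! i \<noteq> t ! j) \<longrightarrow> pc R xs t = 0))"

text \<open>Input structures are taken with universes of type nat; every finite structure is
  isomorphic to one of these, so this loses no generality.\<close>
definition blp_decides :: "'r set \<Rightarrow> ('r \<Rightarrow> nat) \<Rightarrow> ('a, 'r) struc \<Rightarrow> bool" where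
  "blp_decides sig ar A \<longleftrightarrow>
     (\<forall>X :: (nat, 'r) struc. is_struc sig ar X \<longrightarrow> blp_feasible sig ar X A \<longrightarrow> hom_exists sig X A)"

definition sa1_decides :: "'r set \<Rightarrow> ('r \<Rightarrow> nat) \<Rightarrow> ('a, 'r) struc \<Rightarrow> bool" where
  "sa1_decides sig ar A \<longleftrightarrow>
     (\<forall>X :: (nat, 'r) struc. is_struc sig ar X \<longrightarrow> sa1_feasible sig ar X A \<longrightarrow> hom_exists sig X A)"

definition csp_closed_equiv1 :: "'r set \<Rightarrow> ('r \<Rightarrow> nat) \<Rightarrow> ('a, 'r) struc \<Rightarrow> bool" where
  "csp_closed_equiv1 sig ar A \<longleftrightarrow>
     (\<forall>(X1 :: (nat, 'r) struc) (X2 :: (nat, 'r) struc). is_struc sig ar X1 \<longrightarrow> is_struc sig ar X2 \<longrightarrow>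
        equiv1 sig X1 X2 \<longrightarrow> (hom_exists sig X1 A \<longleftrightarrow> hom_exists sig X2 A))"

definition is_polymorphism :: "'r set \<Rightarrow> ('r \<Rightarrow> nat) \<Rightarrow> ('a, 'r) struc \<Rightarrow> nat \<Rightarrow> ('a list \<Rightarrow> 'a) \<Rightarrow> bool" where
  "is_polymorphism sig ar A k f \<longleftrightarrow>
     (\<forall>xs\<in>tuples A k. f xs \<in> univ A) \<and>
     (\<forall>R\<in>sig. \<forall>ts. length ts = k \<longrightarrow> set ts \<subseteq> rels A R \<longrightarrow>
        map (\<lambda>i. f (map (\<lambda>t. t ! i) ts)) [0..<ar R] \<in> rels A R)"

definition is_symmetric :: "('a, 'r) struc \<Rightarrow> nat \<Rightarrow> ('a list \<Rightarrow> 'a) \<Rightarrow> bool" where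
  "is_symmetric A k f \<longleftrightarrow>
     (\<forall>xs\<in>tuples A k. \<forall>\<rho>. \<rho> permutes {..<k} \<longrightarrow> f xs = f (map (\<lambda>i. xs ! \<rho> i) [0..<k]))"

definition has_all_symmetric_polymorphisms :: "'r set \<Rightarrow> ('r \<Rightarrow> nat) \<Rightarrow> ('a, 'r) struc \<Rightarrow> bool" where
  "has_all_symmetric_polymorphisms sig ar A \<longleftrightarrow>
     (\<forall>k\<ge>1. \<exists>f. is_polymorphism sig ar A k f \<and> is_symmetric A k f)"

end

(*
  A rational solution of BLP(X, A), scaled by a common denominator k, is a family of multisets of
  size k, one over A for each element of X and one over the R-tuples of A for each constraint
  R(xs), whose i-th marginals match. A symmetric k-ary polymorphism f turns it into the
  homomorphism x \<mapsto> f(M x). If X1 and X2 are 1-equivalent they have the same colour classes, so a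
  homomorphism X1 \<rightarrow> A, averaged over the colour classes of X1, gives such a solution for X2.

  Conversely, let W be the free structure on the k-multisets over A. It carries an integral
  SA^1 solution, so if SA^1 decides CSP(A) there is a homomorphism W \<rightarrow> A, which is a symmetric
  k-ary polymorphism. For closure under 1-equivalence compare two k-fold covers of W, which are
  1-equivalent as all k-fold covers of W are: the trivial one maps to A only if W does, and the
  one twisted so that its m-th sheet reads off the m-th row of every constraint maps to A.
*)
theory Submission
  imports Defs
begin

definition list_of_mset :: "'a multiset \<Rightarrow> 'a list" where
  "list_of_mset M = (SOME xs. mset xs = M)"

lemma mset_list_of_mset [simp]: "mset (list_of_mset M) = M"
  unfolding list_of_mset_def by (rule someI_ex) (rule ex_mset)

lemma length_list_of_mset [simp]: "length (list_of_mset M) = size M"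
  by (metis mset_list_of_mset size_mset)

lemma set_list_of_mset [simp]: "set (list_of_mset M) = set_mset M"
  by (metis mset_list_of_mset set_mset_mset)

lemma count_sum_replicate_mset:
  "finite S \<Longrightarrow> count (\<Sum>t\<in>S. replicate_mset (n t) t) a = (if a \<in> S then n a else 0)"
  by (simp add: count_sum eq_commute[of _ a])

lemma count_image_mset_eq_sum:
  assumes "finite S" "set_mset M \<subseteq> S"
  shows "count (image_mset g M) a = (\<Sum>t\<in>{t\<in>S. g t = a}. count M t)"
proof -
  have "count (image_mset g M) a = (\<Sum>t\<in>g -` {a} \<inter> set_mset M. count M t)"
    by (rule count_image_mset)
  also have "\<dots> = (\<Sum>t\<in>{t\<in>S. g t = a}. count M t)"
    using assms by (intro sum.mono_neutral_left) (auto simp: count_eq_zero_iff)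
  finally show ?thesis .
qed

lemma sum_count_eq_size:
  "finite S \<Longrightarrow> set_mset M \<subseteq> S \<Longrightarrow> (\<Sum>a\<in>S. count M a) = size M"
  unfolding size_multiset_overloaded_eq
  by (rule sum.mono_neutral_right) (auto simp: count_eq_zero_iff)

lemma count_image_mset_mset_set:
  assumes "finite S"
  shows "count (image_mset g (mset_set S)) z = card {x\<in>S. g x = z}"
proof -
  have "count (image_mset g (mset_set S)) z = (\<Sum>x\<in>g -` {z} \<inter> S. count (mset_set S) x)"
    using assms by (simp add: count_image_mset)
  also have "\<dots> = card (g -` {z} \<inter> S)" using assms by simp
  also have "g -` {z} \<inter> S = {x\<in>S. g x = z}" by auto
  finally show ?thesis .
qed

lemma size_filter_image_mset_set:
  "finite S \<Longrightarrow> size (filter_mset P (image_mset g (mset_set S))) = card {x\<in>S. P (g x)}"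
  by (simp add: image_mset_filter_mset_swap[symmetric])

lemma set_mset_repeat_mset: "set_mset (repeat_mset n M) = (if n = 0 then {} else set_mset M)"
  by (induction n) auto

lemma image_mset_repeat_mset: "image_mset f (repeat_mset n M) = repeat_mset n (image_mset f M)"
  by (induction n) auto

lemma common_denominator:
  fixes V :: "rat set"
  assumes "finite V"
  obtains D :: nat where "D > 0" "\<And>q. q \<in> V \<Longrightarrow> of_nat D * q \<in> \<int>"
proof
  define D where "D = (\<Prod>q\<in>V. nat (snd (quotient_of q)))"
  show "D > 0" unfolding D_def using quotient_of_denom_pos' by (simp add: prod_pos)
  fix q assume q: "q \<in> V"
  obtain n d where nd: "quotient_of q = (n, d)" by (cases "quotient_of q")
  have "nat d dvd D" unfolding D_def using q assms nd by (metis dvd_prodI snd_conv)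
  then obtain e where "D = nat d * e" by blast
  moreover have "q = of_int n / of_int d" "d > 0"
    using quotient_of_div[OF nd] quotient_of_denom_pos[OF nd] .
  ultimately have "of_nat D * q = of_int (n * int e)" by (simp add: field_simps)
  then show "of_nat D * q \<in> \<int>" by simp
qed

lemma of_nat_nat_floor_Ints: "q \<in> \<int> \<Longrightarrow> 0 \<le> q \<Longrightarrow> of_nat (nat \<lfloor>q\<rfloor>) = (q :: 'a :: floor_ceiling)"
  by (auto elim: Ints_cases)

lemma ex_large_fibre:
  assumes fin: "finite B" and ne: "B \<noteq> {}" and hB: "\<And>r. r < N \<Longrightarrow> h r \<in> B"
    and N: "card B * n \<le> N"
  shows "\<exists>b\<in>B. n \<le> card {r. r < N \<and> h r = b}"
proof (rule ccontr)
  assume "\<not> (\<exists>b\<in>B. n \<le> card {r. r < N \<and> h r = b})"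
  then have small: "\<And>b. b \<in> B \<Longrightarrow> card {r. r < N \<and> h r = b} < n" by force
  have "{..<N} = (\<Union>b\<in>B. {r. r < N \<and> h r = b})" using hB by auto
  then have "N = card (\<Union>b\<in>B. {r. r < N \<and> h r = b})" by (metis card_lessThan)
  also have "\<dots> = (\<Sum>b\<in>B. card {r. r < N \<and> h r = b})"
    by (rule card_UN_disjoint) (use fin in auto)
  also have "\<dots> < card B * n" using sum_strict_mono[OF fin ne small] by simp
  finally show False using N by simp
qed

lemma ex_distinct_list_choice:
  assumes "\<And>i. i < n \<Longrightarrow> finite (G i) \<and> n \<le> card (G i)"
  shows "\<exists>rr. length rr = n \<and> distinct rr \<and> (\<forall>i<n. rr ! i \<in> G i)"
proof -
  have "m \<le> n \<Longrightarrow> \<exists>rr. length rr = m \<and> distinct rr \<and> (\<forall>i<m. rr ! i \<in> G i)" for m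
  proof (induction m)
    case (Suc m)
    then obtain rr where rr: "length rr = m" "distinct rr" "\<forall>i<m. rr ! i \<in> G i" by auto
    have m: "m < n" using Suc.prems by simp
    have "card (set rr) = m" using distinct_card[OF rr(2)] rr(1) by simp
    then have "card (set rr) < card (G m)" using assms[OF m] m by linarith
    then have "\<not> G m \<subseteq> set rr" using assms[OF m] by (meson card_mono finite_set not_le)
    then obtain x where "x \<in> G m" "x \<notin> set rr" by blast
    then have "length (rr @ [x]) = Suc m \<and> distinct (rr @ [x]) \<and> (\<forall>i<Suc m. (rr @ [x]) ! i \<in> G i)"
      using rr by (auto simp: nth_append less_Suc_eq)
    then show ?case by blast
  qed simp
  then show ?thesis by blast
qed

section \<open>Structures and homomorphisms\<close>

lemma finite_tuples: "finite (univ A) \<Longrightarrow> finite (tuples A n)"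
  using finite_lists_length_eq[of "univ A" n] by (simp add: tuples_def conj_commute)

lemma marginal_sum_replicate_mset:
  assumes A: "finite (univ A)" and i: "i < n"
    and w: "\<And>a. a \<in> univ A \<Longrightarrow> (\<Sum>t\<in>{t\<in>tuples A n. t ! i = a}. w t) = m a"
  shows "image_mset (\<lambda>t. t ! i) (\<Sum>t\<in>tuples A n. replicate_mset (w t) t)
       = (\<Sum>a\<in>univ A. replicate_mset (m a) a)"
proof (rule multiset_eqI)
  fix a
  have "count (image_mset (\<lambda>t. t ! i) (\<Sum>t\<in>tuples A n. replicate_mset (w t) t)) a
      = (\<Sum>t\<in>{t\<in>tuples A n. t ! i = a}. w t)"
    using finite_tuples[OF A]
    by (subst count_image_mset_eq_sum[of "tuples A n"])
      (auto simp: set_mset_sum count_sum_replicate_mset intro!: sum.cong)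
  also have "\<dots> = count (\<Sum>a\<in>univ A. replicate_mset (m a) a) a"
  proof (cases "a \<in> univ A")
    case False
    then have "{t\<in>tuples A n. t ! i = a} = {}"
      using i by (auto simp: tuples_def) (metis nth_mem subsetD)
    with False A show ?thesis by (simp only: sum.empty count_sum_replicate_mset if_False)
  qed (use w A in \<open>simp add: count_sum_replicate_mset\<close>)
  finally show "count (image_mset (\<lambda>t. t ! i) (\<Sum>t\<in>tuples A n. replicate_mset (w t) t)) a
      = count (\<Sum>a\<in>univ A. replicate_mset (m a) a) a" .
qed

lemma set_constraint_subset_univ:
  assumes "is_struc sig ar S" "c \<in> constraints sig S"
  shows "set (snd c) \<subseteq> univ S"
proof -
  obtain R t where "c = (R, t)" "R \<in> sig" "t \<in> rels S R"
    using assms(2) by (auto simp: constraints_def)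
  with assms(1) show ?thesis by (auto simp: is_struc_def)
qed

lemma constraintsD:
  assumes "is_signature sig ar" "is_struc sig ar S" "c \<in> constraints sig S"
  shows "fst c \<in> sig" "snd c \<in> rels S (fst c)" "length (snd c) = ar (fst c)"
    "set (snd c) \<subseteq> univ S" "snd c \<noteq> []"
proof -
  obtain R t where c: "c = (R, t)" "R \<in> sig" "t \<in> rels S R"
    using assms(3) by (auto simp: constraints_def)
  then have "length t = ar R" "set t \<subseteq> univ S" "ar R \<ge> 1"
    using assms(1,2) by (auto simp: is_struc_def is_signature_def)
  with c show "fst c \<in> sig" "snd c \<in> rels S (fst c)" "length (snd c) = ar (fst c)"
    "set (snd c) \<subseteq> univ S" "snd c \<noteq> []"
    by auto
qed

lemma finite_constraints:
  assumes "is_signature sig ar" "is_struc sig ar X"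
  shows "finite (constraints sig X)"
proof (rule finite_subset)
  show "constraints sig X \<subseteq> sig \<times> (\<Union>R\<in>sig. tuples X (ar R))"
    using assms(2) by (auto simp: constraints_def is_struc_def tuples_def)
  show "finite (sig \<times> (\<Union>R\<in>sig. tuples X (ar R)))"
    using assms by (auto simp: is_signature_def is_struc_def intro: finite_tuples)
qed

lemma finite_fg_vertices:
  "is_signature sig ar \<Longrightarrow> is_struc sig ar S \<Longrightarrow> finite (fg_vertices sig S)"
  using finite_constraints[of sig ar S] by (simp add: fg_vertices_def is_struc_def)

lemma symmetric_eq_if_mset_eq:
  assumes "is_symmetric A k f" "xs \<in> tuples A k" "mset ys = mset xs"
  shows "f ys = f xs"
proof -
  obtain p where p: "p permutes {..<length xs}" "permute_list p xs = ys"
    using mset_eq_permutation[OF assms(3)] by blast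
  have "length xs = k" using assms(2) by (simp add: tuples_def)
  moreover have "ys = map (\<lambda>i. xs ! p i) [0..<length xs]"
    using p(2) by (simp add: permute_list_def)
  ultimately show ?thesis using assms(1,2) p(1) unfolding is_symmetric_def by metis
qed

definition is_hom :: "'r set \<Rightarrow> ('x \<Rightarrow> 'y) \<Rightarrow> ('x, 'r) struc \<Rightarrow> ('y, 'r) struc \<Rightarrow> bool" where
  "is_hom sig h X Y \<longleftrightarrow> h ` univ X \<subseteq> univ Y \<and> (\<forall>R\<in>sig. \<forall>t\<in>rels X R. map h t \<in> rels Y R)"

lemma hom_exists_iff_is_hom: "hom_exists sig X A \<longleftrightarrow> (\<exists>h. is_hom sig h X A)"
  by (simp add: hom_exists_def is_hom_def)

lemma is_hom_comp: "is_hom sig g X Y \<Longrightarrow> is_hom sig h Y Z \<Longrightarrow> is_hom sig (h \<circ> g) X Z"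
  by (auto simp: is_hom_def image_subset_iff simp flip: map_map)

lemma hom_exists_trans: "is_hom sig g X Y \<Longrightarrow> hom_exists sig Y A \<Longrightarrow> hom_exists sig X A"
  using is_hom_comp by (metis hom_exists_iff_is_hom)

section \<open>Integral solutions of the basic LP\<close>

text \<open>A solution of BLP(X, A) with values in (1/k)\<int>, multiplied by k: the multisets M x and
  T R xs of size k record k p_x and k p_R(xs).\<close>
definition mset_solution ::
  "'r set \<Rightarrow> ('r \<Rightarrow> nat) \<Rightarrow> ('x, 'r) struc \<Rightarrow> ('a, 'r) struc \<Rightarrow> nat \<Rightarrow>
   ('x \<Rightarrow> 'a multiset) \<Rightarrow> ('r \<Rightarrow> 'x list \<Rightarrow> 'a list multiset) \<Rightarrow> bool" where
  "mset_solution sig ar X A k M T \<longleftrightarrow>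
     (\<forall>x\<in>univ X. size (M x) = k \<and> set_mset (M x) \<subseteq> univ A) \<and>
     (\<forall>R\<in>sig. \<forall>xs\<in>rels X R. size (T R xs) = k \<and> set_mset (T R xs) \<subseteq> rels A R \<and>
        (\<forall>i<ar R. image_mset (\<lambda>t. t ! i) (T R xs) = M (xs ! i)))"

lemma hom_exists_if_mset_solution:
  assumes X: "is_struc sig ar X"
    and f: "is_polymorphism sig ar A k f" "is_symmetric A k f"
    and sol: "mset_solution sig ar X A k M T"
  shows "hom_exists sig X A"
proof -
  define h where "h x = f (list_of_mset (M x))" for x
  have M_tuple: "list_of_mset (M x) \<in> tuples A k" if "x \<in> univ X" for x
    using sol that by (simp add: mset_solution_def tuples_def)
  have "h ` univ X \<subseteq> univ A"
    using f(1) M_tuple by (auto simp: is_polymorphism_def h_def)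
  moreover have "map h xs \<in> rels A R" if R: "R \<in> sig" and xs: "xs \<in> rels X R" for R xs
  proof -
    define ts where "ts = list_of_mset (T R xs)"
    have xs_len: "length xs = ar R" and xs_set: "set xs \<subseteq> univ X"
      using X R xs by (auto simp: is_struc_def)
    have "length ts = k" "set ts \<subseteq> rels A R"
      using sol R xs by (auto simp: mset_solution_def ts_def)
    then have poly: "map (\<lambda>i. f (map (\<lambda>t. t ! i) ts)) [0..<ar R] \<in> rels A R"
      using f(1) R by (simp add: is_polymorphism_def)
    have "f (map (\<lambda>t. t ! i) ts) = h (xs ! i)" if i: "i < ar R" for i
    proof -
      have "mset (map (\<lambda>t. t ! i) ts) = mset (list_of_mset (M (xs ! i)))"
        using sol R xs i by (simp add: mset_solution_def ts_def)
      moreover have "xs ! i \<in> univ X" using xs_len xs_set i by auto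
      ultimately show ?thesis
        unfolding h_def using symmetric_eq_if_mset_eq[OF f(2) M_tuple] by blast
    qed
    then have "map h xs = map (\<lambda>i. f (map (\<lambda>t. t ! i) ts)) [0..<ar R]"
      using xs_len by (auto intro: nth_equalityI)
    with poly show ?thesis by simp
  qed
  ultimately show ?thesis unfolding hom_exists_def by blast
qed

lemma mset_solution_comp_hom:
  assumes X': "is_struc sig ar X'" and g: "is_hom sig g X' X"
    and sol: "mset_solution sig ar X A k M T"
  shows "mset_solution sig ar X' A k (M \<circ> g) (\<lambda>R xs. T R (map g xs))"
  unfolding mset_solution_def
proof (intro conjI ballI allI impI)
  fix x assume "x \<in> univ X'"
  then have "g x \<in> univ X" using g by (auto simp: is_hom_def)
  then show "size ((M \<circ> g) x) = k" "set_mset ((M \<circ> g) x) \<subseteq> univ A"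
    using sol by (simp_all add: mset_solution_def)
next
  fix R xs assume R: "R \<in> sig" and xs: "xs \<in> rels X' R"
  then have gxs: "map g xs \<in> rels X R" using g by (simp add: is_hom_def)
  then show "size (T R (map g xs)) = k" "set_mset (T R (map g xs)) \<subseteq> rels A R"
    using sol R by (auto simp: mset_solution_def)
  fix i assume "i < ar R"
  moreover have "length xs = ar R" using X' R xs by (simp add: is_struc_def)
  ultimately show "image_mset (\<lambda>t. t ! i) (T R (map g xs)) = (M \<circ> g) (xs ! i)"
    using sol R gxs by (simp add: mset_solution_def)
qed

lemma blp_system_if_mset_solution:
  assumes A: "is_struc sig ar A" and X: "is_struc sig ar X" and k: "k \<ge> 1"
    and sol: "mset_solution sig ar X A k M T"
  shows "blp_system sig ar X A (\<lambda>x a. of_nat (count (M x) a) / of_nat k)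
           (\<lambda>R xs t. of_nat (count (T R xs) t) / of_nat k)"
proof -
  have k_pos: "(of_nat k :: rat) > 0" using k by simp
  have M: "size (M x) = k" "set_mset (M x) \<subseteq> univ A" if "x \<in> univ X" for x
    using sol that by (auto simp: mset_solution_def)
  have T: "size (T R xs) = k" "set_mset (T R xs) \<subseteq> rels A R"
    "\<And>i. i < ar R \<Longrightarrow> image_mset (\<lambda>t. t ! i) (T R xs) = M (xs ! i)"
    if "(R, xs) \<in> constraints sig X" for R xs
    using sol that by (auto simp: mset_solution_def constraints_def)
  have T_tuples: "set_mset (T R xs) \<subseteq> tuples A (ar R)" if "(R, xs) \<in> constraints sig X" for R xs
    using T(2)[OF that] A that by (auto simp: constraints_def is_struc_def tuples_def)
  have marginal: "of_nat (count (M (xs ! i)) a) / of_nat k =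
      (\<Sum>t\<in>{t\<in>tuples A (ar R). t ! i = a}. of_nat (count (T R xs) t) / (of_nat k :: rat))"
    if c: "(R, xs) \<in> constraints sig X" and i: "i < length xs" for R xs i a
  proof -
    have "length xs = ar R" using X c by (auto simp: constraints_def is_struc_def)
    then have "count (M (xs ! i)) a = count (image_mset (\<lambda>t. t ! i) (T R xs)) a"
      using T(3)[OF c] i by simp
    also have "\<dots> = (\<Sum>t\<in>{t\<in>tuples A (ar R). t ! i = a}. count (T R xs) t)"
      using T_tuples[OF c] A by (intro count_image_mset_eq_sum) (auto simp: is_struc_def finite_tuples)
    finally show ?thesis by (simp add: sum_divide_distrib[symmetric])
  qed
  have "(\<Sum>a\<in>univ A. of_nat (count (M x) a) / of_nat k) = (1 :: rat)" if "x \<in> univ X" for x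
    using sum_count_eq_size[of "univ A" "M x"] M[OF that] A k_pos
    by (simp add: is_struc_def sum_divide_distrib[symmetric] flip: of_nat_sum)
  moreover have "count (M x) a \<le> k" if "x \<in> univ X" for x a
    using M(1)[OF that] count_le_size by metis
  moreover have "count (T R xs) t \<le> k" if "(R, xs) \<in> constraints sig X" for R xs t
    using T(1)[OF that] count_le_size by metis
  moreover have "count (T R xs) t = 0" if "(R, xs) \<in> constraints sig X" "t \<notin> rels A R" for R xs t
    using T(2)[OF that(1)] that(2) by (auto simp: count_eq_zero_iff)
  ultimately show ?thesis
    using k_pos marginal by (auto simp: blp_system_def divide_le_eq_1)
qed

lemma sa1_feasible_if_distinct:
  fixes A :: "('a, 'r) struc"
  assumes "blp_feasible sig ar X A" and "\<forall>R\<in>sig. \<forall>t\<in>rels X R. distinct t"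
  shows "sa1_feasible sig ar X A"
proof -
  have "\<not> (xs ! i = xs ! j \<and> t ! i \<noteq> t ! j)"
    if "(R, xs) \<in> constraints sig X" "i < length xs" "j < length xs" for R xs i j and t :: "'a list"
    using assms(2) that by (auto simp: constraints_def nth_eq_iff_index_eq)
  then show ?thesis
    using assms(1) unfolding blp_feasible_def sa1_feasible_def by fast
qed

lemma mset_solution_of_counts:
  assumes sg: "is_signature sig ar" and A: "finite (univ A)" and X: "is_struc sig ar X"
    and size_M: "\<And>x. x \<in> univ X \<Longrightarrow> (\<Sum>a\<in>univ A. m x a) = k"
    and supp_T: "\<And>R xs t. (R, xs) \<in> constraints sig X \<Longrightarrow> t \<in> tuples A (ar R) \<Longrightarrow>
      n R xs t \<noteq> 0 \<Longrightarrow> t \<in> rels A R"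
    and marginal: "\<And>R xs i a. (R, xs) \<in> constraints sig X \<Longrightarrow> i < ar R \<Longrightarrow> a \<in> univ A \<Longrightarrow>
      (\<Sum>t\<in>{t\<in>tuples A (ar R). t ! i = a}. n R xs t) = m (xs ! i) a"
  shows "mset_solution sig ar X A k (\<lambda>x. \<Sum>a\<in>univ A. replicate_mset (m x a) a)
           (\<lambda>R xs. \<Sum>t\<in>tuples A (ar R). replicate_mset (n R xs t) t)"
    (is "mset_solution _ _ _ _ _ ?M ?T")
proof -
  have set_M: "set_mset (?M x) \<subseteq> univ A" for x
    using A by (auto simp: set_mset_sum)
  have column_T: "image_mset (\<lambda>t. t ! i) (?T R xs) = ?M (xs ! i)"
    if c: "(R, xs) \<in> constraints sig X" and i: "i < ar R" for R xs i
    using marginal_sum_replicate_mset[OF A i] marginal[OF c i] by blast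
  show ?thesis
    unfolding mset_solution_def
  proof (intro conjI ballI allI impI)
    fix R xs assume R: "R \<in> sig" and xs: "xs \<in> rels X R"
    then have c: "(R, xs) \<in> constraints sig X" by (simp add: constraints_def)
    show "set_mset (?T R xs) \<subseteq> rels A R"
      using finite_tuples[OF A] supp_T[OF c] by (auto simp: set_mset_sum split: if_splits)
    show "image_mset (\<lambda>t. t ! i) (?T R xs) = ?M (xs ! i)" if "i < ar R" for i
      using column_T[OF c that] .
    have "0 < ar R" using sg R by (auto simp: is_signature_def)
    then have "xs ! 0 \<in> univ X" using constraintsD(3,4)[OF sg X c] by auto
    have "size (?T R xs) = size (image_mset (\<lambda>t. t ! 0) (?T R xs))" by simp
    also have "\<dots> = k"
      using column_T[OF c \<open>0 < ar R\<close>] size_M[OF \<open>xs ! 0 \<in> univ X\<close>] by simp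
    finally show "size (?T R xs) = k" .
  qed (use size_M set_M in auto)
qed

lemma blp_system_common_denominator:
  fixes px :: "'x \<Rightarrow> 'a \<Rightarrow> rat" and pc :: "'r \<Rightarrow> 'x list \<Rightarrow> 'a list \<Rightarrow> rat"
    and X :: "('x, 'r) struc" and A :: "('a, 'r) struc"
  assumes sg: "is_signature sig ar" and A: "is_struc sig ar A" and X: "is_struc sig ar X"
  obtains D :: nat where "D > 0"
    "\<And>x a. x \<in> univ X \<Longrightarrow> a \<in> univ A \<Longrightarrow> of_nat D * px x a \<in> \<int>"
    "\<And>R xs t. (R, xs) \<in> constraints sig X \<Longrightarrow> t \<in> tuples A (ar R) \<Longrightarrow> of_nat D * pc R xs t \<in> \<int>"
proof -
  have fin_A: "finite (univ A)" and fin_X: "finite (univ X)"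
    using A X by (auto simp: is_struc_def)
  define V where "V = (\<lambda>(x, a). px x a) ` (univ X \<times> univ A) \<union>
    (\<lambda>(c, t). pc (fst c) (snd c) t) ` Sigma (constraints sig X) (\<lambda>c. tuples A (ar (fst c)))"
  have "finite V"
    unfolding V_def using fin_A fin_X finite_constraints[OF sg X] finite_tuples[OF fin_A] by blast
  then obtain D where "D > 0" "\<And>q. q \<in> V \<Longrightarrow> of_nat D * q \<in> \<int>"
    using common_denominator by blast
  moreover have "px x a \<in> V" if "x \<in> univ X" "a \<in> univ A" for x a
    unfolding V_def using that by (auto intro: rev_image_eqI[of "(x, a)"])
  moreover have "pc R xs t \<in> V" if "(R, xs) \<in> constraints sig X" "t \<in> tuples A (ar R)" for R xs t
    unfolding V_def using that by (auto intro: rev_image_eqI[of "((R, xs), t)"])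
  ultimately show ?thesis using that by blast
qed

lemma mset_solution_if_blp_system:
  assumes sg: "is_signature sig ar" and A: "is_struc sig ar A" and X: "is_struc sig ar X"
    and blp: "blp_system sig ar X A px pc"
  obtains k M T where "k \<ge> 1" "mset_solution sig ar X A k M T"
proof -
  obtain D where D: "D > 0"
    "\<And>x a. x \<in> univ X \<Longrightarrow> a \<in> univ A \<Longrightarrow> of_nat D * px x a \<in> \<int>"
    "\<And>R xs t. (R, xs) \<in> constraints sig X \<Longrightarrow> t \<in> tuples A (ar R) \<Longrightarrow> of_nat D * pc R xs t \<in> \<int>"
    using blp_system_common_denominator[OF sg A X] by blast
  define cnt where "cnt q = nat \<lfloor>of_nat D * q\<rfloor>" for q :: rat
  have px: "of_nat (cnt (px x a)) = of_nat D * px x a" if "x \<in> univ X" "a \<in> univ A" for x a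
    using of_nat_nat_floor_Ints[OF D(2)[OF that]] blp that by (simp add: cnt_def blp_system_def)
  have pc: "of_nat (cnt (pc R xs t)) = of_nat D * pc R xs t"
    if "(R, xs) \<in> constraints sig X" "t \<in> tuples A (ar R)" for R xs t
  proof -
    have "pc R xs t \<ge> 0" using blp that unfolding blp_system_def by fast
    then show ?thesis using of_nat_nat_floor_Ints[OF D(3)[OF that]] by (simp add: cnt_def)
  qed
  have "mset_solution sig ar X A D (\<lambda>x. \<Sum>a\<in>univ A. replicate_mset (cnt (px x a)) a)
      (\<lambda>R xs. \<Sum>t\<in>tuples A (ar R). replicate_mset (cnt (pc R xs t)) t)"
  proof (rule mset_solution_of_counts[OF sg _ X])
    show "finite (univ A)" using A by (simp add: is_struc_def)
  next
    fix x assume x: "x \<in> univ X"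
    have "rat_of_nat (\<Sum>a\<in>univ A. cnt (px x a)) = of_nat D * (\<Sum>a\<in>univ A. px x a)"
      using px[OF x] by (simp add: sum_distrib_left)
    also have "\<dots> = of_nat D" using blp x by (simp add: blp_system_def)
    finally show "(\<Sum>a\<in>univ A. cnt (px x a)) = D" by (simp only: of_nat_eq_iff)
  next
    fix R xs t assume "(R, xs) \<in> constraints sig X" "t \<in> tuples A (ar R)" "cnt (pc R xs t) \<noteq> 0"
    moreover from this(3) have "pc R xs t \<noteq> 0" by (auto simp: cnt_def)
    ultimately show "t \<in> rels A R" using blp unfolding blp_system_def by fast
  next
    fix R xs i a assume c: "(R, xs) \<in> constraints sig X" and i: "i < ar R" and a: "a \<in> univ A"
    have i_len: "i < length xs" and xi: "xs ! i \<in> univ X"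
      using constraintsD(3,4)[OF sg X c] i by auto
    have "rat_of_nat (\<Sum>t\<in>{t\<in>tuples A (ar R). t ! i = a}. cnt (pc R xs t))
        = of_nat D * (\<Sum>t\<in>{t\<in>tuples A (ar R). t ! i = a}. pc R xs t)"
      using pc[OF c] by (simp add: sum_distrib_left)
    also have "\<dots> = of_nat D * px (xs ! i) a"
      using blp c a i_len by (auto simp: blp_system_def)
    also have "\<dots> = of_nat (cnt (px (xs ! i) a))"
      using px[OF xi a] by simp
    finally show "(\<Sum>t\<in>{t\<in>tuples A (ar R). t ! i = a}. cnt (pc R xs t)) = cnt (px (xs ! i) a)"
      by (simp only: of_nat_eq_iff)
  qed
  moreover have "D \<ge> 1" using D(1) by simp
  ultimately show ?thesis using that by blast
qed

section \<open>Colour refinement\<close>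

definition colour :: "'r set \<Rightarrow> ('a, 'r) struc \<Rightarrow> 'a + ('r \<times> 'a list) \<Rightarrow> nat \<Rightarrow> 'r color" where
  "colour sig S v = (\<lambda>j. delta sig S j v)"

lemma colour_eq_iff: "colour sig S u = colour sig T v \<longleftrightarrow> (\<forall>j. delta sig S j u = delta sig T j v)"
  by (simp add: colour_def fun_eq_iff)

lemma equiv1_iff_colours:
  "equiv1 sig A B \<longleftrightarrow>
     image_mset (colour sig A) (mset_set (fg_vertices sig A)) =
     image_mset (colour sig B) (mset_set (fg_vertices sig B))"
  by (simp add: equiv1_def colour_def[abs_def])

lemma delta_Suc_determines_delta:
  fixes sig :: "'r set"
  assumes sg: "is_signature sig ar" and S: "is_struc sig ar S"
  shows "\<exists>g. \<forall>w\<in>fg_vertices sig S. g (delta sig S (Suc j) w) = delta sig S j w"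
proof (induction j)
  case 0
  txt \<open>In round 1 an element sees only constraints, a constraint at least one element.\<close>
  define g :: "'r color \<Rightarrow> 'r color" where
    "g \<gamma> = (case \<gamma> of Refine M \<Rightarrow> Base (\<forall>x\<in>#M. snd x \<noteq> Base True) | Base b \<Rightarrow> Base b)" for \<gamma>
  have "g (delta sig S (Suc 0) w) = delta sig S 0 w" if "w \<in> fg_vertices sig S" for w
  proof (cases w)
    case (Inr c)
    then have "snd c \<noteq> []"
      using that constraintsD(5)[OF sg S] by (auto simp: fg_vertices_def)
    then obtain a where "a \<in> set (snd c)" by (cases "snd c") auto
    then show ?thesis using Inr by (auto simp: g_def)
  qed (auto simp: g_def)
  then show ?case by blast
next
  case (Suc j)
  then obtain g where g: "\<And>w. w \<in> fg_vertices sig S \<Longrightarrow> g (delta sig S (Suc j) w) = delta sig S j w"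
    by blast
  define G where
    "G \<gamma> = (case \<gamma> of Refine M \<Rightarrow> Refine (image_mset (\<lambda>(l, \<gamma>'). (l, g \<gamma>')) M) | Base b \<Rightarrow> Base b)"
    for \<gamma>
  have "G (delta sig S (Suc (Suc j)) w) = delta sig S (Suc j) w" if w: "w \<in> fg_vertices sig S" for w
  proof (cases w)
    case (Inl a)
    have "Inr c \<in> fg_vertices sig S" if "c \<in># mset_set {c \<in> constraints sig S. a \<in> set (snd c)}" for c
      using that finite_constraints[OF sg S] by (simp add: fg_vertices_def)
    then show ?thesis
      using Inl g by (auto simp: G_def multiset.map_comp simp del: delta.simps(3) intro!: image_mset_cong)
  next
    case (Inr c)
    have "Inl a \<in> fg_vertices sig S" if "a \<in> set (snd c)" for a
      using that w Inr constraintsD(4)[OF sg S] by (auto simp: fg_vertices_def)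
    then show ?thesis
      using Inr g by (auto simp: G_def multiset.map_comp simp del: delta.simps(2) intro!: image_mset_cong)
  qed
  then show ?case by blast
qed

lemma delta_eq_if_delta_le_eq:
  assumes sg: "is_signature sig ar" and S: "is_struc sig ar S"
    and uv: "u \<in> fg_vertices sig S" "v \<in> fg_vertices sig S"
  shows "j \<le> J \<Longrightarrow> delta sig S J u = delta sig S J v \<Longrightarrow> delta sig S j u = delta sig S j v"
proof (induction J)
  case (Suc J)
  show ?case
  proof (cases "j = Suc J")
    case False
    obtain g where "\<forall>w\<in>fg_vertices sig S. g (delta sig S (Suc J) w) = delta sig S J w"
      using delta_Suc_determines_delta[OF sg S] by blast
    then have "delta sig S J u = delta sig S J v" using Suc.prems(2) uv by metis
    with False Suc show ?thesis by simp
  qed (use Suc.prems in simp)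
qed simp

lemma delta_stabilises:
  assumes sg: "is_signature sig ar" and S: "is_struc sig ar S"
  obtains J where "\<And>u v. u \<in> fg_vertices sig S \<Longrightarrow> v \<in> fg_vertices sig S \<Longrightarrow>
    delta sig S J u = delta sig S J v \<Longrightarrow> colour sig S u = colour sig S v"
proof -
  define P where "P = {(u, v) \<in> fg_vertices sig S \<times> fg_vertices sig S. colour sig S u \<noteq> colour sig S v}"
  define sep where "sep p = (SOME j. delta sig S j (fst p) \<noteq> delta sig S j (snd p))" for p
  define J where "J = Max (insert 0 (sep ` P))"
  have "finite P"
    using finite_fg_vertices[OF sg S] by (auto simp: P_def intro: finite_subset[of _ "_ \<times> _"])
  have "colour sig S u = colour sig S v"
    if uv: "u \<in> fg_vertices sig S" "v \<in> fg_vertices sig S" and J: "delta sig S J u = delta sig S J v"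
    for u v
  proof (rule ccontr)
    assume "colour sig S u \<noteq> colour sig S v"
    then have "(u, v) \<in> P" and "\<exists>j. delta sig S j u \<noteq> delta sig S j v"
      using uv by (auto simp: P_def colour_eq_iff)
    then have "delta sig S (sep (u, v)) u \<noteq> delta sig S (sep (u, v)) v"
      unfolding sep_def using someI_ex[of "\<lambda>j. delta sig S j u \<noteq> delta sig S j v"] by simp
    moreover have "sep (u, v) \<le> J"
      unfolding J_def using \<open>finite P\<close> \<open>(u, v) \<in> P\<close> by (intro Max_ge) auto
    ultimately show False using delta_eq_if_delta_le_eq[OF sg S uv _ J] by blast
  qed
  then show ?thesis using that by blast
qed

lemma delta_Suc_Inr_eq_fst_eq:
  assumes sg: "is_signature sig ar" and S: "is_struc sig ar S" and c: "c \<in> constraints sig S"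
    and eq: "delta sig S (Suc j) (Inr c) = delta sig T (Suc j) (Inr c')"
  shows "fst c = fst c'"
proof -
  obtain b where "b \<in> set (snd c)"
    using constraintsD(5)[OF sg S c] by (cases "snd c") auto
  then have "(edge_label c b, delta sig S j (Inl b)) \<in>#
      image_mset (\<lambda>a. (edge_label c a, delta sig S j (Inl a))) (mset_set (set (snd c)))"
    by simp
  moreover have "image_mset (\<lambda>a. (edge_label c a, delta sig S j (Inl a))) (mset_set (set (snd c)))
      = image_mset (\<lambda>a. (edge_label c' a, delta sig T j (Inl a))) (mset_set (set (snd c')))"
    using eq by (simp only: delta.simps color.inject prod.collapse)
  ultimately have "(edge_label c b, delta sig S j (Inl b)) \<in>#
      image_mset (\<lambda>a. (edge_label c' a, delta sig T j (Inl a))) (mset_set (set (snd c')))"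
    by (simp only:)
  then show ?thesis by (auto simp: edge_label_def)
qed

lemma delta_Suc_Inr_eq_nth_eq:
  fixes sig :: "'r set"
  assumes len: "length (snd c) = length (snd c')" and i: "i < length (snd c)"
    and eq: "delta sig S (Suc j) (Inr c) = delta sig T (Suc j) (Inr c')"
  shows "delta sig S j (Inl (snd c ! i)) = delta sig T j (Inl (snd c' ! i))"
proof -
  have position_i: "filter_mset (\<lambda>(l, \<gamma>). i \<in> fst l)
      (image_mset (\<lambda>a. (edge_label d a, delta sig U j (Inl a))) (mset_set (set (snd d))))
     = {# (edge_label d (snd d ! i), delta sig U j (Inl (snd d ! i))) #}"
    if "i < length (snd d)" for d :: "'r \<times> 'z list" and U :: "('z, 'r) struc"
  proof -
    have "{a \<in> set (snd d). i \<in> fst (edge_label d a)} = {snd d ! i}"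
      using that by (auto simp: edge_label_def)
    then show ?thesis by (simp add: image_mset_filter_mset_swap[symmetric])
  qed
  show ?thesis using eq position_i[of c S] position_i[of c' T] i len by simp
qed

lemma colour_Inr_eqD:
  assumes sg: "is_signature sig ar" and S: "is_struc sig ar S" and T: "is_struc sig ar T"
    and c: "c \<in> constraints sig S" and c': "c' \<in> constraints sig T"
    and eq: "colour sig S (Inr c) = colour sig T (Inr c')"
  shows "fst c = fst c'"
    and "i < length (snd c) \<Longrightarrow> colour sig S (Inl (snd c ! i)) = colour sig T (Inl (snd c' ! i))"
proof -
  show fst_eq: "fst c = fst c'"
    using delta_Suc_Inr_eq_fst_eq[OF sg S c] eq by (metis colour_eq_iff)
  then have "length (snd c) = length (snd c')"
    using constraintsD(3)[OF sg S c] constraintsD(3)[OF sg T c'] by simp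
  moreover have "delta sig S (Suc j) (Inr c) = delta sig T (Suc j) (Inr c')" for j
    using eq unfolding colour_eq_iff by blast
  ultimately show "colour sig S (Inl (snd c ! i)) = colour sig T (Inl (snd c' ! i))"
    if "i < length (snd c)"
    unfolding colour_eq_iff using delta_Suc_Inr_eq_nth_eq[OF _ that] by blast
qed

lemma card_constraints_at_colour_eq:
  assumes sg: "is_signature sig ar" and S: "is_struc sig ar S"
    and y: "y \<in> univ S" "y' \<in> univ S" and yy': "colour sig S (Inl y) = colour sig S (Inl y')"
    and c0: "c0 \<in> constraints sig S"
  shows "card {c\<in>constraints sig S. i < length (snd c) \<and> snd c ! i = y \<and>
            colour sig S (Inr c) = colour sig S (Inr c0)}
       = card {c\<in>constraints sig S. i < length (snd c) \<and> snd c ! i = y' \<and>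
            colour sig S (Inr c) = colour sig S (Inr c0)}"
proof -
  obtain J where J: "\<And>u v. u \<in> fg_vertices sig S \<Longrightarrow> v \<in> fg_vertices sig S \<Longrightarrow>
      delta sig S J u = delta sig S J v \<Longrightarrow> colour sig S u = colour sig S v"
    using delta_stabilises[OF sg S] by blast
  have fin: "finite (constraints sig S)" by (rule finite_constraints[OF sg S])
  txt \<open>In round J + 1 an element records its incident constraints with their positions and
    round-J colours, and from round J on colours are stable.\<close>
  have count: "card {c\<in>constraints sig S. i < length (snd c) \<and> snd c ! i = z \<and>
            colour sig S (Inr c) = colour sig S (Inr c0)}
      = size (filter_mset (\<lambda>(l, \<gamma>). i \<in> fst l \<and> \<gamma> = delta sig S J (Inr c0))
          (image_mset (\<lambda>c. (edge_label c z, delta sig S J (Inr c)))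
            (mset_set {c \<in> constraints sig S. z \<in> set (snd c)})))" for z
  proof -
    have "colour sig S (Inr c) = colour sig S (Inr c0) \<longleftrightarrow> delta sig S J (Inr c) = delta sig S J (Inr c0)"
      if "c \<in> constraints sig S" for c
      using J[of "Inr c" "Inr c0"] that c0 unfolding colour_eq_iff fg_vertices_def by blast
    then have "{c\<in>constraints sig S. i < length (snd c) \<and> snd c ! i = z \<and>
            colour sig S (Inr c) = colour sig S (Inr c0)}
        = {c \<in> {c \<in> constraints sig S. z \<in> set (snd c)}.
            (\<lambda>(l, \<gamma>). i \<in> fst l \<and> \<gamma> = delta sig S J (Inr c0)) (edge_label c z, delta sig S J (Inr c))}"
      by (auto simp: edge_label_def)
    then show ?thesis using fin by (simp add: size_filter_image_mset_set)
  qed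
  moreover have "delta sig S (Suc J) (Inl y) = delta sig S (Suc J) (Inl y')"
    using yy' unfolding colour_eq_iff by blast
  ultimately show ?thesis using count[of y] count[of y'] by simp
qed

lemma colour_class_column:
  fixes sig :: "'r set" and S :: "('x, 'r) struc"
  assumes sg: "is_signature sig ar" and S: "is_struc sig ar S"
    and c0: "c0 \<in> constraints sig S" and i: "i < length (snd c0)"
  defines "\<Theta> \<equiv> {c \<in> constraints sig S. colour sig S (Inr c) = colour sig S (Inr c0)}"
    and "K \<equiv> {z \<in> univ S. colour sig S (Inl z) = colour sig S (Inl (snd c0 ! i))}"
  shows "image_mset (\<lambda>c. snd c ! i) (mset_set \<Theta>)
       = repeat_mset (card {c\<in>\<Theta>. snd c ! i = snd c0 ! i}) (mset_set K)"
proof (rule multiset_eqI)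
  fix z
  have fin_\<Theta>: "finite \<Theta>" unfolding \<Theta>_def using finite_constraints[OF sg S] by simp
  have fin_K: "finite K" unfolding K_def using S by (simp add: is_struc_def)
  have entry: "i < length (snd c) \<and> snd c ! i \<in> K" if c: "c \<in> \<Theta>" for c
  proof -
    have cS: "c \<in> constraints sig S" and eq: "colour sig S (Inr c) = colour sig S (Inr c0)"
      using c by (auto simp: \<Theta>_def)
    have "fst c = fst c0" by (rule colour_Inr_eqD(1)[OF sg S S cS c0 eq])
    then have "length (snd c) = length (snd c0)"
      using constraintsD(3)[OF sg S cS] constraintsD(3)[OF sg S c0] by simp
    then have "i < length (snd c)" using i by simp
    moreover have "snd c ! i \<in> univ S" using constraintsD(4)[OF sg S cS] calculation by auto
    moreover have "colour sig S (Inl (snd c ! i)) = colour sig S (Inl (snd c0 ! i))"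
      using colour_Inr_eqD(2)[OF sg S S cS c0 eq] calculation(1) .
    ultimately show ?thesis by (simp add: K_def)
  qed
  have "count (image_mset (\<lambda>c. snd c ! i) (mset_set \<Theta>)) z = card {c\<in>\<Theta>. snd c ! i = z}"
    by (rule count_image_mset_mset_set[OF fin_\<Theta>])
  also have "\<dots> = count (repeat_mset (card {c\<in>\<Theta>. snd c ! i = snd c0 ! i}) (mset_set K)) z"
  proof (cases "z \<in> K")
    case True
    have set_eq: "{c\<in>\<Theta>. snd c ! i = w} = {c\<in>constraints sig S. i < length (snd c) \<and> snd c ! i = w \<and>
        colour sig S (Inr c) = colour sig S (Inr c0)}" for w
      using entry unfolding \<Theta>_def by blast
    have "snd c0 ! i \<in> univ S" using constraintsD(4)[OF sg S c0] i by auto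
    moreover have "z \<in> univ S" "colour sig S (Inl z) = colour sig S (Inl (snd c0 ! i))"
      using True by (simp_all add: K_def)
    ultimately have "card {c\<in>\<Theta>. snd c ! i = z} = card {c\<in>\<Theta>. snd c ! i = snd c0 ! i}"
      unfolding set_eq by (intro card_constraints_at_colour_eq[OF sg S _ _ _ c0])
    then show ?thesis using True fin_K by simp
  next
    case False
    then have "{c\<in>\<Theta>. snd c ! i = z} = {}" using entry by auto
    then show ?thesis using False fin_K by (simp only: card.empty count_repeat_mset) simp
  qed
  finally show "count (image_mset (\<lambda>c. snd c ! i) (mset_set \<Theta>)) z =
      count (repeat_mset (card {c\<in>\<Theta>. snd c ! i = snd c0 ! i}) (mset_set K)) z" .
qed

lemma equiv1_colour_classes_nonempty:
  fixes X1 :: "('x, 'r) struc" and X2 :: "('y, 'r) struc"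
  assumes sg: "is_signature sig ar" and S1: "is_struc sig ar X1" and S2: "is_struc sig ar X2"
    and eqv: "equiv1 sig X1 X2"
  shows "y \<in> univ X2 \<Longrightarrow> \<exists>z\<in>univ X1. colour sig X1 (Inl z) = colour sig X2 (Inl y)"
    and "c \<in> constraints sig X2 \<Longrightarrow> \<exists>c'\<in>constraints sig X1. colour sig X1 (Inr c') = colour sig X2 (Inr c)"
proof -
  have "set_mset (image_mset (colour sig X1) (mset_set (fg_vertices sig X1))) =
     set_mset (image_mset (colour sig X2) (mset_set (fg_vertices sig X2)))"
    using eqv unfolding equiv1_iff_colours by (rule arg_cong)
  then have colours: "colour sig X1 ` fg_vertices sig X1 = colour sig X2 ` fg_vertices sig X2"
    using finite_fg_vertices[OF sg S1] finite_fg_vertices[OF sg S2] by simp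
  have same_kind: "\<exists>u\<in>fg_vertices sig X1. isl u = isl v \<and> colour sig X1 u = colour sig X2 v"
    if "v \<in> fg_vertices sig X2" for v
  proof -
    from that have "colour sig X2 v \<in> colour sig X1 ` fg_vertices sig X1"
      unfolding colours by (rule imageI)
    then obtain u where u: "u \<in> fg_vertices sig X1" "colour sig X1 u = colour sig X2 v"
      by (metis imageE)
    then have "delta sig X1 0 u = delta sig X2 0 v" unfolding colour_eq_iff by blast
    then have "isl u = isl v" by simp
    with u show ?thesis by blast
  qed
  show "\<exists>z\<in>univ X1. colour sig X1 (Inl z) = colour sig X2 (Inl y)" if y: "y \<in> univ X2"
  proof -
    obtain u where "u \<in> fg_vertices sig X1" "isl u" "colour sig X1 u = colour sig X2 (Inl y)"
      using same_kind[of "Inl y"] y by (auto simp: fg_vertices_def)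
    then show ?thesis by (cases u) (auto simp: fg_vertices_def)
  qed
  show "\<exists>c'\<in>constraints sig X1. colour sig X1 (Inr c') = colour sig X2 (Inr c)"
    if c: "c \<in> constraints sig X2"
  proof -
    obtain u where "u \<in> fg_vertices sig X1" "\<not> isl u" "colour sig X1 u = colour sig X2 (Inr c)"
      using same_kind[of "Inr c"] c by (auto simp: fg_vertices_def)
    then show ?thesis by (cases u) (auto simp: fg_vertices_def)
  qed
qed

text \<open>An element (constraint) of X2 gets the h-image of the elements (constraints) of X1 of the
  same colour, repeated L / (class size) times; L is divisible by every class size.\<close>
locale equiv1_transfer =
  fixes sig :: "'r set" and ar :: "'r \<Rightarrow> nat" and X1 :: "('x, 'r) struc" and X2 :: "('y, 'r) struc"
    and A :: "('a, 'r) struc" and h :: "'x \<Rightarrow> 'a"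
  assumes sg: "is_signature sig ar" and S1: "is_struc sig ar X1" and S2: "is_struc sig ar X2"
    and eqv: "equiv1 sig X1 X2" and h: "is_hom sig h X1 A"
begin

definition L :: nat where
  "L = fact (card (univ X1) + card (constraints sig X1))"

definition element_class :: "'y \<Rightarrow> 'x set" where
  "element_class y = {z \<in> univ X1. colour sig X1 (Inl z) = colour sig X2 (Inl y)}"

definition constraint_class :: "'r \<times> 'y list \<Rightarrow> ('r \<times> 'x list) set" where
  "constraint_class c = {c' \<in> constraints sig X1. colour sig X1 (Inr c') = colour sig X2 (Inr c)}"

definition element_mset :: "'y \<Rightarrow> 'a multiset" where
  "element_mset y =
     repeat_mset (L div card (element_class y)) (image_mset h (mset_set (element_class y)))"

definition constraint_mset :: "'r \<Rightarrow> 'y list \<Rightarrow> 'a list multiset" where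
  "constraint_mset R xs = repeat_mset (L div card (constraint_class (R, xs)))
     (image_mset (map h \<circ> snd) (mset_set (constraint_class (R, xs))))"

lemma finite_element_class: "finite (element_class y)"
  using S1 by (simp add: element_class_def is_struc_def)

lemma finite_constraint_class: "finite (constraint_class c)"
  using finite_constraints[OF sg S1] by (simp add: constraint_class_def)

lemma dvd_L: "1 \<le> n \<Longrightarrow> n \<le> card (univ X1) + card (constraints sig X1) \<Longrightarrow> n dvd L"
  unfolding L_def by (rule dvd_fact)

lemma card_element_class:
  assumes "y \<in> univ X2"
  shows "card (element_class y) > 0" "card (element_class y) dvd L"
proof -
  have "element_class y \<noteq> {}"
    using equiv1_colour_classes_nonempty(1)[OF sg S1 S2 eqv assms] by (auto simp: element_class_def)
  then show "card (element_class y) > 0"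
    using finite_element_class by (simp add: card_gt_0_iff)
  moreover have "card (element_class y) \<le> card (univ X1)"
    using S1 by (intro card_mono) (auto simp: element_class_def is_struc_def)
  ultimately show "card (element_class y) dvd L" by (intro dvd_L) auto
qed

lemma card_constraint_class:
  assumes "c \<in> constraints sig X2"
  shows "card (constraint_class c) > 0" "card (constraint_class c) dvd L"
proof -
  have "constraint_class c \<noteq> {}"
    using equiv1_colour_classes_nonempty(2)[OF sg S1 S2 eqv assms] by (auto simp: constraint_class_def)
  then show "card (constraint_class c) > 0"
    using finite_constraint_class by (simp add: card_gt_0_iff)
  moreover have "card (constraint_class c) \<le> card (constraints sig X1)"
    using finite_constraints[OF sg S1] by (intro card_mono) (auto simp: constraint_class_def)
  ultimately show "card (constraint_class c) dvd L" by (intro dvd_L) auto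
qed

lemma constraint_classD:
  assumes "c \<in> constraints sig X2" "c' \<in> constraint_class c"
  shows "fst c' = fst c" "snd c' \<in> rels X1 (fst c)" "length (snd c') = ar (fst c)"
proof -
  have c': "c' \<in> constraints sig X1" "colour sig X1 (Inr c') = colour sig X2 (Inr c)"
    using assms(2) by (auto simp: constraint_class_def)
  show "fst c' = fst c" by (rule colour_Inr_eqD(1)[OF sg S1 S2 c'(1) assms(1) c'(2)])
  then show "snd c' \<in> rels X1 (fst c)" "length (snd c') = ar (fst c)"
    using constraintsD(2,3)[OF sg S1 c'(1)] by simp_all
qed

lemma column_constraint_mset:
  assumes c: "(R, xs) \<in> constraints sig X2" and i: "i < ar R"
  shows "image_mset (\<lambda>t. t ! i) (constraint_mset R xs) = element_mset (xs ! i)"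
proof -
  define \<Theta> where "\<Theta> = constraint_class (R, xs)"
  define K where "K = element_class (xs ! i)"
  obtain c0 where c0: "c0 \<in> \<Theta>"
    using card_constraint_class(1)[OF c] unfolding \<Theta>_def card_gt_0_iff by blast
  then have c0_X1: "c0 \<in> constraints sig X1" and c0_eq: "colour sig X1 (Inr c0) = colour sig X2 (Inr (R, xs))"
    by (auto simp: \<Theta>_def constraint_class_def)
  have i_c0: "i < length (snd c0)" using constraint_classD(3)[OF c] c0 i by (simp add: \<Theta>_def)
  have "colour sig X1 (Inl (snd c0 ! i)) = colour sig X2 (Inl (xs ! i))"
    using colour_Inr_eqD(2)[OF sg S1 S2 c0_X1 c c0_eq i_c0] by simp
  then obtain d where d: "image_mset (\<lambda>c. snd c ! i) (mset_set \<Theta>) = repeat_mset d (mset_set K)"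
    using colour_class_column[OF sg S1 c0_X1 i_c0] c0_eq
    by (auto simp: \<Theta>_def K_def constraint_class_def element_class_def)
  have "size (image_mset (\<lambda>c. snd c ! i) (mset_set \<Theta>)) = size (repeat_mset d (mset_set K))"
    by (simp only: d)
  then have card_\<Theta>: "card \<Theta> = d * card K" by simp
  have xi: "xs ! i \<in> univ X2" using constraintsD(3,4)[OF sg S2 c] i by auto
  have "L div card \<Theta> * d = L div card K"
    using card_constraint_class[OF c] card_element_class[OF xi] card_\<Theta> by (auto simp: \<Theta>_def K_def)
  have "image_mset (\<lambda>t. t ! i) (constraint_mset R xs)
      = repeat_mset (L div card \<Theta>) (image_mset h (image_mset (\<lambda>c. snd c ! i) (mset_set \<Theta>)))"
    unfolding constraint_mset_def \<Theta>_def[symmetric] image_mset_repeat_mset multiset.map_comp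
    using constraint_classD(3)[OF c] i finite_constraint_class
    by (auto simp: \<Theta>_def intro!: arg_cong[where f = "repeat_mset _"] image_mset_cong)
  also have "\<dots> = repeat_mset (L div card \<Theta> * d) (image_mset h (mset_set K))"
    by (simp add: d image_mset_repeat_mset mult.commute)
  finally show ?thesis
    using \<open>L div card \<Theta> * d = L div card K\<close> by (simp add: element_mset_def K_def)
qed

lemma mset_solution_class_msets: "mset_solution sig ar X2 A L element_mset constraint_mset"
  unfolding mset_solution_def
proof (intro conjI ballI allI impI)
  fix y assume y: "y \<in> univ X2"
  show "size (element_mset y) = L" using card_element_class[OF y] by (simp add: element_mset_def)
  have "h ` element_class y \<subseteq> univ A" using h by (auto simp: element_class_def is_hom_def)
  then show "set_mset (element_mset y) \<subseteq> univ A"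
    using finite_element_class by (auto simp: element_mset_def set_mset_repeat_mset)
next
  fix R xs assume R: "R \<in> sig" and xs: "xs \<in> rels X2 R"
  then have c: "(R, xs) \<in> constraints sig X2" by (simp add: constraints_def)
  show "size (constraint_mset R xs) = L"
    using card_constraint_class[OF c] by (simp add: constraint_mset_def)
  have "map h (snd c') \<in> rels A R" if "c' \<in> constraint_class (R, xs)" for c'
    using constraint_classD(2)[OF c that] h R by (simp add: is_hom_def)
  then show "set_mset (constraint_mset R xs) \<subseteq> rels A R"
    using finite_constraint_class by (auto simp: constraint_mset_def set_mset_repeat_mset)
  show "image_mset (\<lambda>t. t ! i) (constraint_mset R xs) = element_mset (xs ! i)" if "i < ar R" for i
    using column_constraint_mset[OF c that] .
qed

end

lemma hom_exists_if_equiv1: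
  fixes X1 :: "('x, 'r) struc" and X2 :: "('y, 'r) struc" and A :: "('a, 'r) struc"
  assumes sg: "is_signature sig ar" and S1: "is_struc sig ar X1" and S2: "is_struc sig ar X2"
    and eqv: "equiv1 sig X1 X2" and sym: "has_all_symmetric_polymorphisms sig ar A"
    and hom: "hom_exists sig X1 A"
  shows "hom_exists sig X2 A"
proof -
  obtain h where "is_hom sig h X1 A" using hom by (auto simp: hom_exists_iff_is_hom)
  then interpret equiv1_transfer sig ar X1 X2 A h
    using sg S1 S2 eqv by unfold_locales
  have "L \<ge> 1" by (simp add: L_def Suc_le_eq)
  then obtain f where "is_polymorphism sig ar A L f" "is_symmetric A L f"
    using sym unfolding has_all_symmetric_polymorphisms_def by blast
  then show ?thesis by (rule hom_exists_if_mset_solution[OF S2 _ _ mset_solution_class_msets])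
qed

section \<open>Coverings of factor graphs\<close>

definition map_constraint :: "('x \<Rightarrow> 'y) \<Rightarrow> 'r \<times> 'x list \<Rightarrow> 'r \<times> 'y list" where
  "map_constraint p c = (fst c, map p (snd c))"

definition is_cover :: "'r set \<Rightarrow> ('x \<Rightarrow> 'y) \<Rightarrow> nat \<Rightarrow> ('x, 'r) struc \<Rightarrow> ('y, 'r) struc \<Rightarrow> bool" where
  "is_cover sig p k V U \<longleftrightarrow>
     p ` univ V \<subseteq> univ U \<and> (\<forall>u\<in>univ U. card {v\<in>univ V. p v = u} = k) \<and>
     (\<forall>c\<in>constraints sig V. map_constraint p c \<in> constraints sig U \<and> inj_on p (set (snd c))) \<and>
     (\<forall>d\<in>constraints sig U. card {c\<in>constraints sig V. map_constraint p c = d} = k) \<and>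
     (\<forall>v\<in>univ V. inj_on (map_constraint p) {c\<in>constraints sig V. v \<in> set (snd c)} \<and>
        map_constraint p ` {c\<in>constraints sig V. v \<in> set (snd c)} = {d\<in>constraints sig U. p v \<in> set (snd d)})"

lemma edge_label_map_constraint:
  assumes "inj_on p (set (snd c))" "v \<in> set (snd c)"
  shows "edge_label (map_constraint p c) (p v) = edge_label c v"
proof -
  have "{i. i < length (snd c) \<and> map p (snd c) ! i = p v} = {i. i < length (snd c) \<and> snd c ! i = v}"
    using assms unfolding inj_on_def by auto
  then show ?thesis by (simp add: edge_label_def map_constraint_def)
qed

lemma delta_cover:
  fixes sig :: "'r set" and V :: "('x, 'r) struc" and U :: "('y, 'r) struc"
  assumes sg: "is_signature sig ar" and V: "is_struc sig ar V" and cov: "is_cover sig p k V U"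
  shows "(v \<in> univ V \<longrightarrow> delta sig V j (Inl v) = delta sig U j (Inl (p v))) \<and>
         (c \<in> constraints sig V \<longrightarrow> delta sig V j (Inr c) = delta sig U j (Inr (map_constraint p c)))"
proof (induction j arbitrary: v c)
  case (Suc j)
  have c_cov: "map_constraint p c \<in> constraints sig U" "inj_on p (set (snd c))"
    if "c \<in> constraints sig V" for c
    using cov that by (auto simp: is_cover_def)
  show ?case
  proof (intro conjI impI)
    assume v: "v \<in> univ V"
    let ?C = "{c\<in>constraints sig V. v \<in> set (snd c)}"
    have "image_mset (\<lambda>c. (edge_label c v, delta sig V j (Inr c))) (mset_set ?C)
       = image_mset (\<lambda>d. (edge_label d (p v), delta sig U j (Inr d))) (image_mset (map_constraint p) (mset_set ?C))"
      unfolding multiset.map_comp comp_def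
      using finite_constraints[OF sg V] Suc.IH c_cov by (intro image_mset_cong) (auto simp: edge_label_map_constraint)
    also have "image_mset (map_constraint p) (mset_set ?C) = mset_set {d\<in>constraints sig U. p v \<in> set (snd d)}"
      using cov v by (simp add: is_cover_def image_mset_mset_set)
    finally show "delta sig V (Suc j) (Inl v) = delta sig U (Suc j) (Inl (p v))" by simp
  next
    assume c: "c \<in> constraints sig V"
    have "image_mset (\<lambda>a. (edge_label c a, delta sig V j (Inl a))) (mset_set (set (snd c)))
       = image_mset (\<lambda>b. (edge_label (map_constraint p c) b, delta sig U j (Inl b)))
           (image_mset p (mset_set (set (snd c))))"
      unfolding multiset.map_comp comp_def
      using Suc.IH constraintsD(4)[OF sg V c] c_cov(2)[OF c]
      by (intro image_mset_cong) (auto simp: edge_label_map_constraint)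
    also have "image_mset p (mset_set (set (snd c))) = mset_set (set (snd (map_constraint p c)))"
      using image_mset_mset_set[OF c_cov(2)[OF c]] by (simp add: map_constraint_def)
    finally show "delta sig V (Suc j) (Inr c) = delta sig U (Suc j) (Inr (map_constraint p c))" by simp
  qed
qed simp

lemma image_mset_fg_vertices_cover:
  assumes sg: "is_signature sig ar" and V: "is_struc sig ar V" and U: "is_struc sig ar U"
    and cov: "is_cover sig p k V U"
  shows "image_mset (map_sum p (map_constraint p)) (mset_set (fg_vertices sig V))
       = repeat_mset k (mset_set (fg_vertices sig U))"
proof (rule multiset_eqI)
  fix u
  let ?P = "map_sum p (map_constraint p)"
  have "count (image_mset ?P (mset_set (fg_vertices sig V))) u = card {w\<in>fg_vertices sig V. ?P w = u}"
    by (rule count_image_mset_mset_set[OF finite_fg_vertices[OF sg V]])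
  also have "\<dots> = k * count (mset_set (fg_vertices sig U)) u"
  proof (cases u)
    case (Inl b)
    have "{w\<in>fg_vertices sig V. ?P w = u} = Inl ` {v\<in>univ V. p v = b}"
      by (rule set_eqI, case_tac x) (auto simp: fg_vertices_def Inl)
    moreover have "card {v\<in>univ V. p v = b} = (if b \<in> univ U then k else 0)"
    proof (cases "b \<in> univ U")
      case False
      then have "{v\<in>univ V. p v = b} = {}" using cov by (auto simp: is_cover_def)
      with False show ?thesis by (simp only: card.empty if_False)
    qed (use cov in \<open>auto simp: is_cover_def\<close>)
    ultimately show ?thesis
      using finite_fg_vertices[OF sg U] by (auto simp: card_image Inl fg_vertices_def count_mset_set')
  next
    case (Inr d)
    have "{w\<in>fg_vertices sig V. ?P w = u} = Inr ` {c\<in>constraints sig V. map_constraint p c = d}"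
      by (rule set_eqI, case_tac x) (auto simp: fg_vertices_def Inr)
    moreover have "card {c\<in>constraints sig V. map_constraint p c = d} = (if d \<in> constraints sig U then k else 0)"
    proof (cases "d \<in> constraints sig U")
      case False
      then have "{c\<in>constraints sig V. map_constraint p c = d} = {}" using cov by (auto simp: is_cover_def)
      with False show ?thesis by (simp only: card.empty if_False)
    qed (use cov in \<open>auto simp: is_cover_def\<close>)
    ultimately show ?thesis
      using finite_fg_vertices[OF sg U] by (auto simp: card_image Inr fg_vertices_def count_mset_set')
  qed
  finally show "count (image_mset ?P (mset_set (fg_vertices sig V))) u
      = count (repeat_mset k (mset_set (fg_vertices sig U))) u" by simp
qed

lemma colours_cover:
  assumes sg: "is_signature sig ar" and V: "is_struc sig ar V" and U: "is_struc sig ar U"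
    and cov: "is_cover sig p k V U"
  shows "image_mset (colour sig V) (mset_set (fg_vertices sig V))
       = repeat_mset k (image_mset (colour sig U) (mset_set (fg_vertices sig U)))"
proof -
  let ?P = "map_sum p (map_constraint p)"
  have "colour sig V w = colour sig U (?P w)" if "w \<in> fg_vertices sig V" for w
    using that delta_cover[OF sg V cov] by (auto simp: fg_vertices_def colour_def)
  then have "image_mset (colour sig V) (mset_set (fg_vertices sig V))
      = image_mset (colour sig U) (image_mset ?P (mset_set (fg_vertices sig V)))"
    unfolding multiset.map_comp comp_def
    using finite_fg_vertices[OF sg V] by (intro image_mset_cong) auto
  then show ?thesis by (simp add: image_mset_fg_vertices_cover[OF sg V U cov] image_mset_repeat_mset)
qed

lemma equiv1_if_covers:
  assumes sg: "is_signature sig ar" and V: "is_struc sig ar V" and V': "is_struc sig ar V'"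
    and U: "is_struc sig ar U"
    and cov: "is_cover sig p k V U" and cov': "is_cover sig p' k V' U"
  shows "equiv1 sig V V'"
  unfolding equiv1_iff_colours colours_cover[OF sg V U cov] colours_cover[OF sg V' U cov'] ..

definition rename :: "('x \<Rightarrow> 'y) \<Rightarrow> ('x, 'r) struc \<Rightarrow> ('y, 'r) struc" where
  "rename e X = \<lparr>univ = e ` univ X, rels = (\<lambda>R. map e ` rels X R)\<rparr>"

lemma univ_rename [simp]: "univ (rename e X) = e ` univ X"
  and rels_rename [simp]: "rels (rename e X) R = map e ` rels X R"
  by (simp_all add: rename_def)

lemma constraints_rename: "constraints sig (rename e X) = map_constraint e ` constraints sig X"
  unfolding constraints_def map_constraint_def by force

lemma is_struc_rename: "is_struc sig ar X \<Longrightarrow> is_struc sig ar (rename e X)"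
  by (auto simp: is_struc_def)

lemma is_hom_rename: "is_hom sig e X (rename e X)"
  by (simp add: is_hom_def)

context
  fixes e :: "'x \<Rightarrow> 'y" and X :: "('x, 'r) struc" and sig :: "'r set" and ar :: "'r \<Rightarrow> nat"
  assumes inj: "inj_on e (univ X)" and X: "is_struc sig ar X"
begin

lemma inj_on_map_constraint_rename: "inj_on (map_constraint e) (constraints sig X)"
proof (rule inj_onI)
  fix c c' assume "c \<in> constraints sig X" "c' \<in> constraints sig X"
    and "map_constraint e c = map_constraint e c'"
  moreover from calculation(1,2) have "inj_on e (set (snd c) \<union> set (snd c'))"
    using inj set_constraint_subset_univ[OF X] by (blast intro: inj_on_subset)
  ultimately show "c = c'" by (simp add: map_constraint_def inj_on_map_eq_map prod_eq_iff)
qed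

lemma is_hom_rename_inv: "is_hom sig (inv_into (univ X) e) (rename e X) X"
proof -
  have "map (inv_into (univ X) e) (map e t) = t" if "set t \<subseteq> univ X" for t
    using that inj by (induction t) auto
  then show ?thesis using X by (auto simp: is_hom_def is_struc_def inv_into_into)
qed

lemma is_cover_rename: "is_cover sig e 1 X (rename e X)"
  unfolding is_cover_def
proof (intro conjI ballI)
  show "e ` univ X \<subseteq> univ (rename e X)" by simp
next
  fix c assume c: "c \<in> constraints sig X"
  then show "map_constraint e c \<in> constraints sig (rename e X)" by (simp add: constraints_rename)
  show "inj_on e (set (snd c))" using inj set_constraint_subset_univ[OF X c] by (rule inj_on_subset)
next
  fix u assume "u \<in> univ (rename e X)"
  then obtain x where "x \<in> univ X" "u = e x" by auto
  then have "{v \<in> univ X. e v = u} = {x}" using inj by (auto simp: inj_on_eq_iff)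
  then show "card {v \<in> univ X. e v = u} = 1" by simp
next
  fix d assume "d \<in> constraints sig (rename e X)"
  then obtain c0 where c0: "c0 \<in> constraints sig X" "d = map_constraint e c0"
    by (auto simp: constraints_rename)
  then have "{c \<in> constraints sig X. map_constraint e c = d} = {c0}"
    using inj_on_map_constraint_rename by (auto simp: inj_on_eq_iff)
  then show "card {c \<in> constraints sig X. map_constraint e c = d} = 1" by simp
next
  fix v assume v: "v \<in> univ X"
  show "inj_on (map_constraint e) {c \<in> constraints sig X. v \<in> set (snd c)}"
    using inj_on_map_constraint_rename by (rule inj_on_subset) auto
  have "e v \<in> set (map e (snd c)) \<longleftrightarrow> v \<in> set (snd c)" if "c \<in> constraints sig X" for c
    using v inj set_constraint_subset_univ[OF X that] by (auto simp: inj_on_eq_iff)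
  then show "map_constraint e ` {c \<in> constraints sig X. v \<in> set (snd c)} =
      {d \<in> constraints sig (rename e X). e v \<in> set (snd d)}"
    by (auto simp: constraints_rename map_constraint_def)
qed

lemma equiv1_rename:
  assumes "is_signature sig ar"
  shows "equiv1 sig X (rename e X)"
  using colours_cover[OF assms X is_struc_rename[OF X] is_cover_rename]
  by (simp add: equiv1_iff_colours)

lemma distinct_rename:
  assumes "\<forall>R\<in>sig. \<forall>t\<in>rels X R. distinct t"
  shows "\<forall>R\<in>sig. \<forall>t\<in>rels (rename e X) R. distinct t"
proof (intro ballI)
  fix R t assume "R \<in> sig" "t \<in> rels (rename e X) R"
  then obtain t0 where "t = map e t0" "t0 \<in> rels X R" "distinct t0" "set t0 \<subseteq> univ X"
    using assms X by (auto simp: is_struc_def)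
  then show "distinct t" using inj by (simp add: distinct_map inj_on_subset)
qed

end

text \<open>The lift of U with k sheets: the m-th copy of an R-tuple c takes its i-th entry from
  sheet P R c i m.\<close>
definition lift_tuple ::
  "('r \<Rightarrow> 'u list \<Rightarrow> nat \<Rightarrow> nat \<Rightarrow> nat) \<Rightarrow> 'r \<Rightarrow> 'u list \<Rightarrow> nat \<Rightarrow> ('u \<times> nat) list" where
  "lift_tuple P R c m = map (\<lambda>i. (c ! i, P R c i m)) [0..<length c]"

definition lift ::
  "('u, 'r) struc \<Rightarrow> nat \<Rightarrow> ('r \<Rightarrow> 'u list \<Rightarrow> nat \<Rightarrow> nat \<Rightarrow> nat) \<Rightarrow> ('u \<times> nat, 'r) struc" where
  "lift U k P = \<lparr>univ = univ U \<times> {..<k},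
     rels = (\<lambda>R. {lift_tuple P R c m | c m. c \<in> rels U R \<and> m < k})\<rparr>"

lemma univ_lift [simp]: "univ (lift U k P) = univ U \<times> {..<k}"
  and rels_lift [simp]: "rels (lift U k P) R = {lift_tuple P R c m | c m. c \<in> rels U R \<and> m < k}"
  by (simp_all add: lift_def)

lemma length_lift_tuple [simp]: "length (lift_tuple P R c m) = length c"
  by (simp add: lift_tuple_def)

lemma nth_lift_tuple [simp]: "i < length c \<Longrightarrow> lift_tuple P R c m ! i = (c ! i, P R c i m)"
  by (simp add: lift_tuple_def)

lemma map_fst_lift_tuple [simp]: "map fst (lift_tuple P R c m) = c"
  unfolding lift_tuple_def by (simp add: comp_def map_nth)

lemma set_lift_tuple: "set (lift_tuple P R c m) = {(c ! i, P R c i m) | i. i < length c}"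
  by (auto simp: lift_tuple_def)

lemma constraints_lift:
  "constraints sig (lift U k P) = {(R, lift_tuple P R c m) | R c m. (R, c) \<in> constraints sig U \<and> m < k}"
  unfolding constraints_def by auto

lemma hom_exists_if_hom_exists_lift:
  fixes sig :: "'r set" and U :: "('u, 'r) struc"
  assumes "k \<ge> 1" "hom_exists sig (lift U k (\<lambda>R c i m. m)) A"
  shows "hom_exists sig U A"
proof (rule hom_exists_trans[OF _ assms(2)])
  have "map (\<lambda>u. (u, 0)) c \<in> rels (lift U k (\<lambda>R c i m. m)) R" if "c \<in> rels U R" for R c
  proof -
    have "map (\<lambda>u. (u, 0)) c = lift_tuple (\<lambda>R c i m. m) R c 0"
      unfolding lift_tuple_def by (rule nth_equalityI) auto
    moreover have "0 < k" using assms(1) by simp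
    ultimately show ?thesis using that by auto
  qed
  then show "is_hom sig (\<lambda>u. (u, 0)) U (lift U k (\<lambda>R c i m. m))"
    using assms(1) by (auto simp: is_hom_def)
qed

locale sheet_permutations =
  fixes sig :: "'r set" and ar :: "'r \<Rightarrow> nat" and U :: "('u, 'r) struc" and k :: nat
    and P :: "'r \<Rightarrow> 'u list \<Rightarrow> nat \<Rightarrow> nat \<Rightarrow> nat"
  assumes sg: "is_signature sig ar" and U: "is_struc sig ar U"
    and distinct: "\<And>R c. R \<in> sig \<Longrightarrow> c \<in> rels U R \<Longrightarrow> distinct c"
    and permutes: "\<And>R c i. R \<in> sig \<Longrightarrow> c \<in> rels U R \<Longrightarrow> i < length c \<Longrightarrow> P R c i permutes {..<k}"
    and k: "k \<ge> 1"
begin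

lemma is_struc_lift: "is_struc sig ar (lift U k P)"
  unfolding is_struc_def
proof (intro conjI ballI)
  show "finite (univ (lift U k P))" using U by (simp add: is_struc_def)
next
  fix R assume R: "R \<in> sig"
  then obtain c where "c \<in> rels U R" using U unfolding is_struc_def by blast
  moreover have "0 < k" using k by simp
  ultimately have "lift_tuple P R c 0 \<in> rels (lift U k P) R" by auto
  then show "rels (lift U k P) R \<noteq> {}" by blast
next
  fix R t assume R: "R \<in> sig" and "t \<in> rels (lift U k P) R"
  then obtain c m where t: "t = lift_tuple P R c m" "c \<in> rels U R" "m < k" by auto
  have "length c = ar R" "set c \<subseteq> univ U" using U R t(2) by (auto simp: is_struc_def)
  moreover have "P R c i m < k" if "i < length c" for i
    using permutes_in_image[OF permutes[OF R t(2) that]] t(3) by simp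
  ultimately show "length t = ar R" "set t \<subseteq> univ (lift U k P)"
    using t(1) by (auto simp: set_lift_tuple)
qed

lemma inj_on_lift_tuple:
  assumes "(R, c) \<in> constraints sig U"
  shows "inj_on (lift_tuple P R c) {..<k}"
proof (rule inj_onI)
  fix m m' assume "lift_tuple P R c m = lift_tuple P R c m'"
  have R: "R \<in> sig" "c \<in> rels U R" using assms by (auto simp: constraints_def)
  have c0: "0 < length c" using constraintsD(5)[OF sg U assms] by simp
  with \<open>lift_tuple P R c m = lift_tuple P R c m'\<close> have "P R c 0 m = P R c 0 m'"
    by (metis nth_lift_tuple prod.inject)
  then show "m = m'" using permutes_inj[OF permutes[OF R c0]] by (auto dest: injD)
qed

lemma constraints_at_lift:
  assumes v: "(e, j) \<in> univ (lift U k P)"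
  shows "map_constraint fst ` {c' \<in> constraints sig (lift U k P). (e, j) \<in> set (snd c')}
       = {d \<in> constraints sig U. e \<in> set (snd d)}"
proof
  show "map_constraint fst ` {c' \<in> constraints sig (lift U k P). (e, j) \<in> set (snd c')}
      \<subseteq> {d \<in> constraints sig U. e \<in> set (snd d)}"
    by (auto simp: constraints_lift map_constraint_def set_lift_tuple)
next
  show "{d \<in> constraints sig U. e \<in> set (snd d)}
      \<subseteq> map_constraint fst ` {c' \<in> constraints sig (lift U k P). (e, j) \<in> set (snd c')}"
  proof
    fix d assume d: "d \<in> {d \<in> constraints sig U. e \<in> set (snd d)}"
    then obtain R c where Rc: "d = (R, c)" "R \<in> sig" "c \<in> rels U R" "e \<in> set c"
      by (auto simp: constraints_def)
    obtain i where i: "i < length c" "c ! i = e" using Rc(4) by (auto simp: in_set_conv_nth)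
    have p: "P R c i permutes {..<k}" using permutes[OF Rc(2,3) i(1)] .
    define m where "m = inv (P R c i) j"
    have "m < k" "P R c i m = j"
      using v permutes_in_image[OF permutes_inv[OF p]] permutes_inverses(1)[OF p] by (auto simp: m_def)
    then have "(R, lift_tuple P R c m) \<in> {c' \<in> constraints sig (lift U k P). (e, j) \<in> set (snd c')}"
      using Rc i by (auto simp: constraints_lift constraints_def set_lift_tuple)
    then show "d \<in> map_constraint fst ` {c' \<in> constraints sig (lift U k P). (e, j) \<in> set (snd c')}"
      using Rc(1) by (force simp: map_constraint_def)
  qed
qed

lemma inj_on_constraints_at_lift:
  assumes v: "(e, j) \<in> univ (lift U k P)"
  shows "inj_on (map_constraint fst) {c' \<in> constraints sig (lift U k P). (e, j) \<in> set (snd c')}"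
proof (rule inj_onI)
  fix x y assume x: "x \<in> {c' \<in> constraints sig (lift U k P). (e, j) \<in> set (snd c')}"
    and y: "y \<in> {c' \<in> constraints sig (lift U k P). (e, j) \<in> set (snd c')}"
    and xy: "map_constraint fst x = map_constraint fst y"
  obtain R c m where x': "x = (R, lift_tuple P R c m)" "(R, c) \<in> constraints sig U" "m < k"
      "(e, j) \<in> set (lift_tuple P R c m)"
    using x by (auto simp: constraints_lift)
  obtain m' where y': "y = (R, lift_tuple P R c m')" "(e, j) \<in> set (lift_tuple P R c m')"
    using y xy x' by (auto simp: constraints_lift map_constraint_def)
  have R: "R \<in> sig" "c \<in> rels U R" using x'(2) by (auto simp: constraints_def)
  obtain i where i: "i < length c" "c ! i = e" "P R c i m = j"
    using x'(4) by (auto simp: set_lift_tuple)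
  obtain i' where i': "i' < length c" "c ! i' = e" "P R c i' m' = j"
    using y'(2) by (auto simp: set_lift_tuple)
  have "i = i'" using i i' distinct[OF R] nth_eq_iff_index_eq by metis
  then have "m = m'" using i i' permutes_inj[OF permutes[OF R i(1)]] by (auto dest: injD)
  then show "x = y" using x' y' by simp
qed

lemma is_cover_fst_lift: "is_cover sig fst k (lift U k P) U"
  unfolding is_cover_def
proof (intro conjI ballI)
  show "fst ` univ (lift U k P) \<subseteq> univ U" by auto
next
  fix u assume "u \<in> univ U"
  then have "{v \<in> univ (lift U k P). fst v = u} = {u} \<times> {..<k}" by auto
  then show "card {v \<in> univ (lift U k P). fst v = u} = k" by (simp add: card_cartesian_product)
next
  fix c' assume "c' \<in> constraints sig (lift U k P)"
  then obtain R c m where c': "c' = (R, lift_tuple P R c m)" "(R, c) \<in> constraints sig U"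
    by (auto simp: constraints_lift)
  then show "map_constraint fst c' \<in> constraints sig U" by (simp add: map_constraint_def)
  have "distinct (map fst (lift_tuple P R c m))"
    using distinct c'(2) by (auto simp: constraints_def)
  then have "inj_on fst (set (lift_tuple P R c m))" unfolding distinct_map by blast
  then show "inj_on fst (set (snd c'))" using c'(1) by simp
next
  fix d assume d: "d \<in> constraints sig U"
  obtain R c where Rc: "d = (R, c)" by (cases d) blast
  have "{c' \<in> constraints sig (lift U k P). map_constraint fst c' = d} = (\<lambda>m. (R, lift_tuple P R c m)) ` {..<k}"
    using d Rc by (auto simp: constraints_lift map_constraint_def)
  moreover have "inj_on (\<lambda>m. (R, lift_tuple P R c m)) {..<k}"
    using inj_on_lift_tuple[of R c] d Rc by (auto simp: inj_on_def)
  ultimately show "card {c' \<in> constraints sig (lift U k P). map_constraint fst c' = d} = k"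
    by (simp add: card_image)
next
  fix v assume v: "v \<in> univ (lift U k P)"
  obtain e j where ej: "v = (e, j)" by (cases v) blast
  show "inj_on (map_constraint fst) {c' \<in> constraints sig (lift U k P). v \<in> set (snd c')}"
    using inj_on_constraints_at_lift v unfolding ej .
  show "map_constraint fst ` {c' \<in> constraints sig (lift U k P). v \<in> set (snd c')}
      = {d \<in> constraints sig U. fst v \<in> set (snd d)}"
    using constraints_at_lift v unfolding ej by simp
qed

end

section \<open>The free structure\<close>

definition column :: "'a list list \<Rightarrow> nat \<Rightarrow> 'a multiset" where
  "column ts i = mset (map (\<lambda>t. t ! i) ts)"

definition spread :: "nat \<Rightarrow> 'a list list \<Rightarrow> nat list \<Rightarrow> ('a multiset \<times> nat) list" where
  "spread n ts rr = map (\<lambda>i. (column ts i, rr ! i)) [0..<n]"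

lemma length_spread [simp]: "length (spread n ts rr) = n"
  by (simp add: spread_def)

lemma nth_spread [simp]: "i < n \<Longrightarrow> spread n ts rr ! i = (column ts i, rr ! i)"
  by (simp add: spread_def)

text \<open>Elements are the k-multisets over A, each in N copies; every list ts of k R-tuples of A
  yields the R-constraint on the columns of ts, placed on pairwise distinct copies rr. The copies
  keep constraint tuples repetition-free, as SA^1 needs, and by pigeonhole N = |A| * (maximal
  arity) copies suffice to place every constraint inside the preimage of a popular value.\<close>
definition free_struc ::
  "('r \<Rightarrow> nat) \<Rightarrow> ('a, 'r) struc \<Rightarrow> nat \<Rightarrow> nat \<Rightarrow> ('a multiset \<times> nat, 'r) struc" where
  "free_struc ar A k N = \<lparr>univ = mset ` tuples A k \<times> {..<N},
     rels = (\<lambda>R. {spread (ar R) ts rr | ts rr. length ts = k \<and> set ts \<subseteq> rels A R \<and>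
                    length rr = ar R \<and> distinct rr \<and> set rr \<subseteq> {..<N}})\<rparr>"

lemma univ_free_struc [simp]: "univ (free_struc ar A k N) = mset ` tuples A k \<times> {..<N}"
  and rels_free_struc [simp]: "rels (free_struc ar A k N) R =
    {spread (ar R) ts rr | ts rr. length ts = k \<and> set ts \<subseteq> rels A R \<and>
       length rr = ar R \<and> distinct rr \<and> set rr \<subseteq> {..<N}}"
  by (simp_all add: free_struc_def)

locale free_structure =
  fixes sig :: "'r set" and ar :: "'r \<Rightarrow> nat" and A :: "('a, 'r) struc" and k :: nat
  assumes sg: "is_signature sig ar" and A: "is_struc sig ar A" and k: "k \<ge> 1"
begin

definition max_arity :: nat where
  "max_arity = Max (insert 0 (ar ` sig))"

definition N :: nat where
  "N = card (univ A) * max_arity"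

abbreviation W :: "('a multiset \<times> nat, 'r) struc" where
  "W \<equiv> free_struc ar A k N"

lemma finite_univ_A: "finite (univ A)"
  using A by (simp add: is_struc_def)

lemma ar_le_max_arity: "R \<in> sig \<Longrightarrow> ar R \<le> max_arity"
  unfolding max_arity_def using sg by (intro Max_ge) (auto simp: is_signature_def)

lemma ar_le_N: "R \<in> sig \<Longrightarrow> ar R \<le> N"
proof -
  assume R: "R \<in> sig"
  then obtain t where t: "t \<in> rels A R" using A unfolding is_struc_def by blast
  then have "length t = ar R" "set t \<subseteq> univ A" using A R by (auto simp: is_struc_def)
  moreover have "ar R \<ge> 1" using sg R by (simp add: is_signature_def)
  ultimately have "univ A \<noteq> {}" by (cases t) auto
  then have "card (univ A) \<ge> 1" using finite_univ_A by (simp add: Suc_le_eq card_gt_0_iff)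
  then have "max_arity \<le> N" unfolding N_def by simp
  then show ?thesis using ar_le_max_arity[OF R] by linarith
qed

lemma column_in_free_univ:
  assumes "R \<in> sig" "length ts = k" "set ts \<subseteq> rels A R" "i < ar R"
  shows "column ts i \<in> mset ` tuples A k"
proof -
  have "t ! i \<in> univ A" if "t \<in> set ts" for t
  proof -
    have "length t = ar R" "set t \<subseteq> univ A" using that assms(1,3) A by (auto simp: is_struc_def)
    then show ?thesis using assms(4) by auto
  qed
  then have "map (\<lambda>t. t ! i) ts \<in> tuples A k"
    using assms(2) by (auto simp: tuples_def)
  then show ?thesis unfolding column_def by blast
qed

lemma is_struc_W: "is_struc sig ar W"
  unfolding is_struc_def
proof (intro conjI ballI)
  show "finite (univ W)" using finite_tuples[OF finite_univ_A] by simp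
next
  fix R assume R: "R \<in> sig"
  obtain t where "t \<in> rels A R" using A R unfolding is_struc_def by blast
  then have "length (replicate k t) = k \<and> set (replicate k t) \<subseteq> rels A R \<and>
      length [0..<ar R] = ar R \<and> distinct [0..<ar R] \<and> set [0..<ar R] \<subseteq> {..<N}"
    using ar_le_N[OF R] by auto
  then have "spread (ar R) (replicate k t) [0..<ar R] \<in> rels W R"
    unfolding rels_free_struc by blast
  then show "rels W R \<noteq> {}" by blast
next
  fix R c assume R: "R \<in> sig" and "c \<in> rels W R"
  then obtain ts rr where c: "c = spread (ar R) ts rr" "length ts = k" "set ts \<subseteq> rels A R"
    "length rr = ar R" "set rr \<subseteq> {..<N}"
    by auto
  show "length c = ar R" using c by simp
  show "set c \<subseteq> univ W"
  proof
    fix x assume "x \<in> set c"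
    then obtain i where i: "i < ar R" "x = (column ts i, rr ! i)" using c(1) by (auto simp: in_set_conv_nth)
    then have "rr ! i \<in> set rr" using c(4) by simp
    then show "x \<in> univ W" using i c(5) column_in_free_univ[OF R c(2,3) i(1)] by auto
  qed
qed

lemma distinct_W: "c \<in> rels W R \<Longrightarrow> distinct c"
proof -
  assume "c \<in> rels W R"
  then obtain ts rr where "c = spread (ar R) ts rr" "length rr = ar R" "distinct rr" by auto
  moreover from this have "map snd c = rr" by (auto intro: nth_equalityI)
  ultimately show "distinct c" by (metis distinct_map)
qed

definition rows :: "'r \<Rightarrow> ('a multiset \<times> nat) list \<Rightarrow> 'a list list" where
  "rows R c = (SOME ts. length ts = k \<and> set ts \<subseteq> rels A R \<and> (\<exists>rr. c = spread (ar R) ts rr))"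

lemma rows:
  assumes "c \<in> rels W R"
  shows "length (rows R c) = k" "set (rows R c) \<subseteq> rels A R" "length c = ar R"
    and "i < ar R \<Longrightarrow> fst (c ! i) = column (rows R c) i"
proof -
  have "\<exists>ts. length ts = k \<and> set ts \<subseteq> rels A R \<and> (\<exists>rr. c = spread (ar R) ts rr)"
    using assms by auto
  then have "length (rows R c) = k \<and> set (rows R c) \<subseteq> rels A R \<and> (\<exists>rr. c = spread (ar R) (rows R c) rr)"
    unfolding rows_def by (rule someI_ex)
  then obtain rr where "length (rows R c) = k" "set (rows R c) \<subseteq> rels A R"
    and c: "c = spread (ar R) (rows R c) rr"
    by blast
  then show "length (rows R c) = k" "set (rows R c) \<subseteq> rels A R" by simp_all
  show "length c = ar R" by (subst c) simp
  show "fst (c ! i) = column (rows R c) i" if "i < ar R" by (subst c) (simp add: that)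
qed

lemma mset_solution_W: "mset_solution sig ar W A k fst (\<lambda>R c. mset (rows R c))"
  unfolding mset_solution_def
proof (intro conjI ballI allI impI)
  fix y assume "y \<in> univ W"
  then obtain xs where "fst y = mset xs" "xs \<in> tuples A k" by auto
  then show "size (fst y) = k" "set_mset (fst y) \<subseteq> univ A" by (auto simp: tuples_def)
next
  fix R c i assume "c \<in> rels W R"
  then show "size (mset (rows R c)) = k" "set_mset (mset (rows R c)) \<subseteq> rels A R"
    and "i < ar R \<Longrightarrow> image_mset (\<lambda>t. t ! i) (mset (rows R c)) = fst (c ! i)"
    using rows by (auto simp: column_def)
qed

lemma ex_popular_value:
  assumes h: "is_hom sig h W A" and x: "x \<in> mset ` tuples A k"
  shows "\<exists>a\<in>univ A. max_arity \<le> card {r. r < N \<and> h (x, r) = a}"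
proof (rule ex_large_fibre[OF finite_univ_A])
  obtain xs where "xs \<in> tuples A k" "x = mset xs" using x by blast
  then show "univ A \<noteq> {}" using k by (cases xs) (auto simp: tuples_def)
  show "h (x, r) \<in> univ A" if "r < N" for r using h x that by (auto simp: is_hom_def)
qed (simp add: N_def)

lemma symmetric_polymorphism_if_hom_W:
  assumes h: "is_hom sig h W A"
  shows "\<exists>f. is_polymorphism sig ar A k f \<and> is_symmetric A k f"
proof -
  define v where "v x = (SOME a. a \<in> univ A \<and> max_arity \<le> card {r. r < N \<and> h (x, r) = a})" for x
  have v: "v x \<in> univ A" "max_arity \<le> card {r. r < N \<and> h (x, r) = v x}"
    if "x \<in> mset ` tuples A k" for x
    using someI_ex[OF ex_popular_value[OF h that, unfolded Bex_def]] by (simp_all add: v_def)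
  define f where "f xs = v (mset xs)" for xs
  have "is_symmetric A k f"
    unfolding is_symmetric_def
  proof (intro ballI allI impI)
    fix xs and \<rho> :: "nat \<Rightarrow> nat" assume xs: "xs \<in> tuples A k" and \<rho>: "\<rho> permutes {..<k}"
    have "map (\<lambda>i. xs ! \<rho> i) [0..<k] = permute_list \<rho> xs"
      using xs by (simp add: tuples_def permute_list_def)
    then show "f xs = f (map (\<lambda>i. xs ! \<rho> i) [0..<k])"
      using \<rho> xs by (simp add: f_def tuples_def)
  qed
  moreover have "is_polymorphism sig ar A k f"
    unfolding is_polymorphism_def
  proof (intro conjI ballI allI impI)
    fix xs assume "xs \<in> tuples A k"
    then show "f xs \<in> univ A" using v by (simp add: f_def)
  next
    fix R ts assume R: "R \<in> sig" and ts: "length ts = k" "set ts \<subseteq> rels A R"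
    define G where "G i = {r. r < N \<and> h (column ts i, r) = v (column ts i)}" for i
    have "finite (G i) \<and> ar R \<le> card (G i)" if "i < ar R" for i
      using v(2)[OF column_in_free_univ[OF R ts that]] ar_le_max_arity[OF R] by (simp add: G_def)
    then obtain rr where rr: "length rr = ar R" "distinct rr" "\<forall>i<ar R. rr ! i \<in> G i"
      using ex_distinct_list_choice[of "ar R" G] by blast
    then have "set rr \<subseteq> {..<N}" by (auto simp: in_set_conv_nth G_def)
    then have "spread (ar R) ts rr \<in> rels W R" using ts rr by auto
    then have "map h (spread (ar R) ts rr) \<in> rels A R" using h R by (simp add: is_hom_def)
    moreover have "map h (spread (ar R) ts rr) = map (\<lambda>i. f (map (\<lambda>t. t ! i) ts)) [0..<ar R]"
      using rr(3) by (intro nth_equalityI) (auto simp: G_def f_def column_def)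
    ultimately show "map (\<lambda>i. f (map (\<lambda>t. t ! i) ts)) [0..<ar R] \<in> rels A R" by simp
  qed
  ultimately show ?thesis by blast
qed

text \<open>Sheet m of the lift along untwist carries row m of each constraint: the permutation turns the
  fixed enumeration of the column multiset into the actual column.\<close>
definition untwist :: "'r \<Rightarrow> ('a multiset \<times> nat) list \<Rightarrow> nat \<Rightarrow> nat \<Rightarrow> nat" where
  "untwist R c i = (SOME p. p permutes {..<k} \<and>
     permute_list p (list_of_mset (fst (c ! i))) = map (\<lambda>t. t ! i) (rows R c))"

lemma untwist:
  assumes c: "c \<in> rels W R" and i: "i < length c"
  shows "untwist R c i permutes {..<k}"
    and "permute_list (untwist R c i) (list_of_mset (fst (c ! i))) = map (\<lambda>t. t ! i) (rows R c)"
proof -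
  have "mset (map (\<lambda>t. t ! i) (rows R c)) = mset (list_of_mset (fst (c ! i)))"
    using rows(3,4)[OF c] i by (simp add: column_def)
  then obtain p where "p permutes {..<length (list_of_mset (fst (c ! i)))}"
    "permute_list p (list_of_mset (fst (c ! i))) = map (\<lambda>t. t ! i) (rows R c)"
    by (rule mset_eq_permutation)
  moreover have "length (list_of_mset (fst (c ! i))) = k"
    using arg_cong[OF calculation(2), of length] rows(1)[OF c] by simp
  ultimately have "\<exists>p. p permutes {..<k} \<and>
      permute_list p (list_of_mset (fst (c ! i))) = map (\<lambda>t. t ! i) (rows R c)"
    by auto
  then show "untwist R c i permutes {..<k}"
    and "permute_list (untwist R c i) (list_of_mset (fst (c ! i))) = map (\<lambda>t. t ! i) (rows R c)"
    unfolding untwist_def by (metis (mono_tags, lifting) someI_ex)+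
qed

lemma sheet_permutations_untwist: "sheet_permutations sig ar W k untwist"
  using sg is_struc_W distinct_W untwist(1) k by unfold_locales auto

lemma sheet_permutations_id: "sheet_permutations sig ar W k (\<lambda>R c i m. m)"
  using sg is_struc_W distinct_W k permutes_id[unfolded id_def] by unfold_locales auto

lemma hom_exists_lift_untwist: "hom_exists sig (lift W k untwist) A"
  unfolding hom_exists_iff_is_hom
proof
  define h where "h y = list_of_mset (fst (fst y)) ! snd y" for y :: "('a multiset \<times> nat) \<times> nat"
  show "is_hom sig h (lift W k untwist) A"
    unfolding is_hom_def
  proof (intro conjI ballI)
    show "h ` univ (lift W k untwist) \<subseteq> univ A"
    proof
      fix a assume "a \<in> h ` univ (lift W k untwist)"
      then obtain xs j where "a = list_of_mset (mset xs) ! j" "xs \<in> tuples A k" "j < k"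
        by (auto simp: h_def)
      moreover from this have "list_of_mset (mset xs) ! j \<in> set (list_of_mset (mset xs))"
        by (intro nth_mem) (simp add: tuples_def)
      ultimately show "a \<in> univ A" by (auto simp: tuples_def)
    qed
  next
    fix R t assume R: "R \<in> sig" and "t \<in> rels (lift W k untwist) R"
    then obtain c m where t: "t = lift_tuple untwist R c m" "c \<in> rels W R" "m < k" by auto
    have "map h t = rows R c ! m"
    proof (rule nth_equalityI)
      have "rows R c ! m \<in> rels A R" using rows(1,2)[OF t(2)] t(3) by auto
      then show "length (map h t) = length (rows R c ! m)"
        using t rows(3)[OF t(2)] A R by (simp add: is_struc_def)
    next
      fix i assume "i < length (map h t)"
      then have i: "i < length c" using t(1) by simp
      have len: "length (list_of_mset (fst (c ! i))) = k"
        using arg_cong[OF untwist(2)[OF t(2) i], of length] rows(1)[OF t(2)] by simp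
      have "h (t ! i) = list_of_mset (fst (c ! i)) ! untwist R c i m"
        using t(1) i by (simp add: h_def)
      also have "\<dots> = permute_list (untwist R c i) (list_of_mset (fst (c ! i))) ! m"
        using permute_list_nth[of "untwist R c i" "list_of_mset (fst (c ! i))" m]
          untwist(1)[OF t(2) i] len t(3) by simp
      also have "\<dots> = rows R c ! m ! i"
        using untwist(2)[OF t(2) i] t(3) rows(1)[OF t(2)] by simp
      finally show "map h t ! i = rows R c ! m ! i" using i t(1) by simp
    qed
    then show "map h t \<in> rels A R" using rows(1,2)[OF t(2)] t(3) by auto
  qed
qed

lemma equiv1_lifts: "equiv1 sig (lift W k untwist) (lift W k (\<lambda>R c i m. m))"
  using equiv1_if_covers[OF sg sheet_permutations.is_struc_lift[OF sheet_permutations_untwist]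
      sheet_permutations.is_struc_lift[OF sheet_permutations_id] is_struc_W
      sheet_permutations.is_cover_fst_lift[OF sheet_permutations_untwist]
      sheet_permutations.is_cover_fst_lift[OF sheet_permutations_id]] .

end

section \<open>The equivalences\<close>

lemma blp_decides_if_symmetric_polymorphisms:
  fixes A :: "('a, 'r) struc"
  assumes sg: "is_signature sig ar" and A: "is_struc sig ar A"
    and sym: "has_all_symmetric_polymorphisms sig ar A"
  shows "blp_decides sig ar A"
  unfolding blp_decides_def blp_feasible_def
proof (intro allI impI, elim exE)
  fix X :: "(nat, 'r) struc" and px pc
  assume X: "is_struc sig ar X" and blp: "blp_system sig ar X A px pc"
  obtain k M T where "k \<ge> 1" "mset_solution sig ar X A k M T"
    using mset_solution_if_blp_system[OF sg A X blp] .
  moreover obtain f where "is_polymorphism sig ar A k f" "is_symmetric A k f"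
    using sym \<open>k \<ge> 1\<close> by (auto simp: has_all_symmetric_polymorphisms_def)
  ultimately show "hom_exists sig X A" using hom_exists_if_mset_solution[OF X] by blast
qed

lemma sa1_decides_if_blp_decides: "blp_decides sig ar A \<Longrightarrow> sa1_decides sig ar A"
  by (auto simp: blp_decides_def sa1_decides_def blp_feasible_def sa1_feasible_def)

lemma csp_closed_equiv1_if_symmetric_polymorphisms:
  fixes A :: "('a, 'r) struc"
  assumes sg: "is_signature sig ar" and "has_all_symmetric_polymorphisms sig ar A"
  shows "csp_closed_equiv1 sig ar A"
  unfolding csp_closed_equiv1_def
proof (intro allI impI)
  fix X1 X2 :: "(nat, 'r) struc"
  assume "is_struc sig ar X1" "is_struc sig ar X2" "equiv1 sig X1 X2"
  moreover from this(3) have "equiv1 sig X2 X1" by (simp add: equiv1_def)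
  ultimately show "hom_exists sig X1 A \<longleftrightarrow> hom_exists sig X2 A"
    using hom_exists_if_equiv1[OF sg] assms(2) by blast
qed

lemma symmetric_polymorphisms_if_sa1_decides:
  fixes A :: "('a, 'r) struc"
  assumes sg: "is_signature sig ar" and A: "is_struc sig ar A" and dec: "sa1_decides sig ar A"
  shows "has_all_symmetric_polymorphisms sig ar A"
  unfolding has_all_symmetric_polymorphisms_def
proof (intro allI impI)
  fix k :: nat assume "k \<ge> 1"
  interpret free_structure sig ar A k using sg A \<open>k \<ge> 1\<close> by unfold_locales
  txt \<open>Inputs of the decision procedures have universe nat, so W is replaced by a copy.\<close>
  have "finite (univ W)" using is_struc_W by (simp add: is_struc_def)
  then obtain e :: "_ \<Rightarrow> nat" where e: "inj_on e (univ W)"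
    using finite_imp_inj_to_nat_seg by blast
  have W': "is_struc sig ar (rename e W)" by (rule is_struc_rename[OF is_struc_W])
  have "mset_solution sig ar (rename e W) A k (fst \<circ> inv_into (univ W) e)
      (\<lambda>R xs. mset (rows R (map (inv_into (univ W) e) xs)))"
    by (rule mset_solution_comp_hom[OF W' is_hom_rename_inv[OF e is_struc_W] mset_solution_W])
  then have "blp_feasible sig ar (rename e W) A"
    using blp_system_if_mset_solution[OF A W' \<open>k \<ge> 1\<close>] by (auto simp: blp_feasible_def)
  then have "sa1_feasible sig ar (rename e W) A"
    using sa1_feasible_if_distinct distinct_rename[OF e is_struc_W] distinct_W by blast
  then have "hom_exists sig (rename e W) A" using dec W' by (simp add: sa1_decides_def)
  then have "hom_exists sig W A" by (rule hom_exists_trans[OF is_hom_rename])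
  then show "\<exists>f. is_polymorphism sig ar A k f \<and> is_symmetric A k f"
    using symmetric_polymorphism_if_hom_W by (auto simp: hom_exists_iff_is_hom)
qed

lemma symmetric_polymorphisms_if_csp_closed_equiv1:
  fixes A :: "('a, 'r) struc"
  assumes sg: "is_signature sig ar" and A: "is_struc sig ar A"
    and closed: "csp_closed_equiv1 sig ar A"
  shows "has_all_symmetric_polymorphisms sig ar A"
  unfolding has_all_symmetric_polymorphisms_def
proof (intro allI impI)
  fix k :: nat assume "k \<ge> 1"
  interpret free_structure sig ar A k using sg A \<open>k \<ge> 1\<close> by unfold_locales
  interpret twisted: sheet_permutations sig ar W k untwist by (rule sheet_permutations_untwist)
  interpret straight: sheet_permutations sig ar W k "\<lambda>R c i m. m" by (rule sheet_permutations_id)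
  let ?W2 = "lift W k untwist" and ?W3 = "lift W k (\<lambda>R c i m. m)"
  have "finite (univ ?W2)" "finite (univ ?W3)"
    using twisted.is_struc_lift straight.is_struc_lift by (simp_all add: is_struc_def)
  then obtain e2 e3 :: "_ \<Rightarrow> nat" where e2: "inj_on e2 (univ ?W2)" and e3: "inj_on e3 (univ ?W3)"
    using finite_imp_inj_to_nat_seg by meson
  have "equiv1 sig (rename e2 ?W2) (rename e3 ?W3)"
    using equiv1_lifts equiv1_rename[OF e2 twisted.is_struc_lift sg]
      equiv1_rename[OF e3 straight.is_struc_lift sg]
    by (simp add: equiv1_def)
  moreover have "hom_exists sig (rename e2 ?W2) A"
    using is_hom_rename_inv[OF e2 twisted.is_struc_lift] hom_exists_lift_untwist
    by (rule hom_exists_trans)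
  ultimately have "hom_exists sig (rename e3 ?W3) A"
    using closed is_struc_rename[OF twisted.is_struc_lift] is_struc_rename[OF straight.is_struc_lift]
    unfolding csp_closed_equiv1_def by blast
  then have "hom_exists sig ?W3 A" by (rule hom_exists_trans[OF is_hom_rename])
  then have "hom_exists sig W A" by (rule hom_exists_if_hom_exists_lift[OF \<open>k \<ge> 1\<close>])
  then show "\<exists>f. is_polymorphism sig ar A k f \<and> is_symmetric A k f"
    using symmetric_polymorphism_if_hom_W by (auto simp: hom_exists_iff_is_hom)
qed

theorem theorem5p2:
  fixes sig :: "'r set" and ar :: "'r \<Rightarrow> nat" and A :: "('a, 'r) struc"
  assumes "is_signature sig ar"
    and "is_struc sig ar A"
  shows "(csp_closed_equiv1 sig ar A \<longleftrightarrow> sa1_decides sig ar A)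
       \<and> (sa1_decides sig ar A \<longleftrightarrow> blp_decides sig ar A)
       \<and> (blp_decides sig ar A \<longleftrightarrow> has_all_symmetric_polymorphisms sig ar A)"
  using blp_decides_if_symmetric_polymorphisms[OF assms]
    sa1_decides_if_blp_decides[of sig ar A]
    csp_closed_equiv1_if_symmetric_polymorphisms[OF assms(1)]
    symmetric_polymorphisms_if_sa1_decides[OF assms]
    symmetric_polymorphisms_if_csp_closed_equiv1[OF assms]
  by blast

end
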